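(* Let $V$ be the Volterra operator on $L_2[0,1]$, $Vf(t)=\int_0^tf(s)\,ds$, and let $c>0$. Then for every $f\in L_2[0,1]$, $$\lim_{n\to\infty}\|(I-cV)^nf\|=0\quad\text{and}\quad\lim_{n\to\infty}\|(I+cV)^{-n}f\|=0.$$ *)

theory Defs
  imports "HOL-Analysis.Analysis"
begin

text \<open>Complex L_2[0,1], with elements represented by functions real => complex
  (values outside [0,1] are irrelevant).\<close>

definition L2_01 :: "(real \<Rightarrow> complex) set" where
  "L2_01 = {f. f \<in> borel_measurable (lebesgue_on {0..1}) \<and>
              integrable (lebesgue_on {0..1}) (\<lambda>t. (cmod (f t))^2)}"

definition L2_norm :: "(real \<Rightarrow> complex) \<Rightarrow> real" where
  "L2_norm f = sqrt (integral\<^sup>L (lebesgue_on {0..1}) (\<lambda>t. (cmod (f t))^2))"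

definition volterra :: "(real \<Rightarrow> complex) \<Rightarrow> real \<Rightarrow> complex" where
  "volterra f t = integral\<^sup>L (lebesgue_on {0..t}) f"

definition I_minus_cV :: "real \<Rightarrow> (real \<Rightarrow> complex) \<Rightarrow> real \<Rightarrow> complex" where
  "I_minus_cV c f = (\<lambda>t. f t - complex_of_real c * volterra f t)"

definition I_plus_cV_inv :: "real \<Rightarrow> (real \<Rightarrow> complex) \<Rightarrow> real \<Rightarrow> complex" where
  "I_plus_cV_inv c f = (SOME g. g \<in> L2_01 \<and>
      (AE t in lebesgue_on {0..1}. g t + complex_of_real c * volterra g t = f t))"

end

theory Submission
  imports Defs
begin

text \<open>
  Write \<open>\<parallel>f\<parallel>\<^sub>s\<^sup>2 = \<integral>\<^sub>0\<^sup>1 e\<^sup>-\<^sup>2\<^sup>s\<^sup>t |f t|\<^sup>2 dt\<close>, a norm equivalent to the \<open>L\<^sub>2\<close> norm for \<open>s \<ge> 0\<close>.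
  Integration by parts gives, for every \<open>g\<close>,
    \<open>2 Re \<integral>\<^sub>0\<^sup>1 e\<^sup>-\<^sup>2\<^sup>s\<^sup>t g t \<cdot> conj (V g t) dt = e\<^sup>-\<^sup>2\<^sup>s |V g 1|\<^sup>2 + 2 s \<parallel>V g\<parallel>\<^sub>s\<^sup>2\<close>
  (first for continuous \<open>g\<close>, then by density of the range of \<open>V\<close>). Expanding squares, this yields
  \<open>\<parallel>(I - c V) g\<parallel>\<^sub>c\<^sup>2 + c\<^sup>2 \<parallel>V g\<parallel>\<^sub>c\<^sup>2 \<le> \<parallel>g\<parallel>\<^sub>c\<^sup>2\<close> and \<open>\<parallel>g\<parallel>\<^sub>0\<^sup>2 + c\<^sup>2 \<parallel>V g\<parallel>\<^sub>0\<^sup>2 \<le> \<parallel>(I + c V) g\<parallel>\<^sub>0\<^sup>2\<close>.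
  So \<open>T = I - c V\<close> (resp. \<open>T = (I + c V)\<^sup>-\<^sup>1\<close>) is a contraction in the norm with \<open>s = c\<close> (resp. \<open>s = 0\<close>),
  and telescoping gives \<open>\<Sum>\<^sub>n \<parallel>V T\<^sup>n f\<parallel>\<^sup>2 < \<infinity>\<close>, hence \<open>V T\<^sup>n f \<longrightarrow> 0\<close>. As \<open>T\<close> commutes with \<open>V\<close>,
  \<open>T\<^sup>n f \<longrightarrow> 0\<close> for \<open>f\<close> in the dense range of \<open>V\<close>, and uniform boundedness of
  the \<open>T\<^sup>n\<close> extends this to all \<open>f\<close>.
\<close>

abbreviation M :: "real measure" where
  "M \<equiv> lebesgue_on {0..1}"

lemma measurable_ident_lebesgue_on [measurable]: "(\<lambda>x::real. x) \<in> borel_measurable (lebesgue_on S)"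
  by (intro measurable_restrict_space1 measurable_completion) simp

lemma finite_measure_M: "finite_measure M"
  by (simp add: finite_measure_lebesgue_on)

lemma integrable_const_M [simp]: "integrable M (\<lambda>x. c::real)"
  using finite_measure.integrable_const[OF finite_measure_M] .

lemma measure_M_space [simp]: "measure M {0..1} = 1"
  by (simp add: measure_restrict_space)

lemma integral_const_M [simp]: "(\<integral>x. (c::real) \<partial>M) = c"
  by (simp add: measure_restrict_space)

lemma AE_M_neq: "AE x in M. x \<noteq> a"
proof -
  have "AE x in lebesgue. x \<noteq> a" by (rule AE_completion[OF AE_lborel_singleton])
  then show ?thesis by (subst AE_restrict_space_iff) (auto elim: AE_mp)
qed

lemma cmod_add_sq_le: "(cmod (x + y))^2 \<le> 2 * (cmod x)^2 + 2 * (cmod y)^2"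
proof -
  have "(cmod (x + y))^2 \<le> (cmod x + cmod y)^2"
    by (simp add: norm_triangle_ineq power_mono)
  also have "\<dots> \<le> 2 * (cmod x)^2 + 2 * (cmod y)^2"
    using zero_le_power2[of "cmod x - cmod y"] by (simp add: power2_eq_square algebra_simps)
  finally show ?thesis .
qed

lemma L2_01I: "f \<in> borel_measurable M \<Longrightarrow> integrable M (\<lambda>t. (cmod (f t))^2) \<Longrightarrow> f \<in> L2_01"
  by (simp add: L2_01_def)

lemma L2_01_measurable: "f \<in> L2_01 \<Longrightarrow> f \<in> borel_measurable M"
  by (simp add: L2_01_def)

lemma L2_01_integrable_sq: "f \<in> L2_01 \<Longrightarrow> integrable M (\<lambda>t. (cmod (f t))^2)"
  by (simp add: L2_01_def)

lemma L2_01_integrable: assumes "f \<in> L2_01" shows "integrable M f"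
proof (rule Bochner_Integration.integrable_bound)
  show "integrable M (\<lambda>t. 1 + (cmod (f t))^2)"
    using L2_01_integrable_sq[OF assms] by simp
  show "f \<in> borel_measurable M" using L2_01_measurable[OF assms] .
  have "cmod z \<le> 1 + (cmod z)^2" for z
  proof -
    have "2 * cmod z \<le> 1 + (cmod z)^2"
      using zero_le_power2[of "cmod z - 1"] by (simp add: power2_eq_square algebra_simps)
    then show ?thesis using norm_ge_zero[of z] by linarith
  qed
  then show "AE x in M. norm (f x) \<le> norm (1 + (cmod (f x))\<^sup>2)"
    by (intro AE_I2) simp
qed

lemma L2_01_integrable_norm: "f \<in> L2_01 \<Longrightarrow> integrable M (\<lambda>t. cmod (f t))"
  using L2_01_integrable integrable_norm by blast

lemma L2_01_add: assumes "f \<in> L2_01" "g \<in> L2_01" shows "(\<lambda>t. f t + g t) \<in> L2_01"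
proof (rule L2_01I)
  note [measurable] = L2_01_measurable[OF assms(1)] L2_01_measurable[OF assms(2)]
  show "(\<lambda>t. f t + g t) \<in> borel_measurable M" by measurable
  show "integrable M (\<lambda>t. (cmod (f t + g t))\<^sup>2)"
  proof (rule Bochner_Integration.integrable_bound)
    show "integrable M (\<lambda>t. 2 * (cmod (f t))^2 + 2 * (cmod (g t))^2)"
      using L2_01_integrable_sq[OF assms(1)] L2_01_integrable_sq[OF assms(2)] by simp
    show "(\<lambda>t. (cmod (f t + g t))\<^sup>2) \<in> borel_measurable M" by measurable
    show "AE x in M. norm ((cmod (f x + g x))\<^sup>2) \<le> norm (2 * (cmod (f x))\<^sup>2 + 2 * (cmod (g x))\<^sup>2)"
      using cmod_add_sq_le by (intro AE_I2) simp
  qed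
qed

lemma L2_01_scale: assumes "f \<in> L2_01" shows "(\<lambda>t. a * f t) \<in> L2_01"
proof (rule L2_01I)
  show "(\<lambda>t. a * f t) \<in> borel_measurable M" using L2_01_measurable[OF assms] by measurable
  have "integrable M (\<lambda>t. (cmod a)^2 * (cmod (f t))\<^sup>2)" using L2_01_integrable_sq[OF assms] by simp
  then show "integrable M (\<lambda>t. (cmod (a * f t))\<^sup>2)" by (simp add: norm_mult power_mult_distrib)
qed

lemma L2_01_diff: assumes "f \<in> L2_01" "g \<in> L2_01" shows "(\<lambda>t. f t - g t) \<in> L2_01"
  using L2_01_add[OF assms(1) L2_01_scale[OF assms(2), of "-1"]] by simp

lemma L2_01_zero: "(\<lambda>t. 0) \<in> L2_01"
  by (rule L2_01I) auto

lemma L2_01_bounded: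
  assumes "f \<in> borel_measurable M" "\<And>t. t \<in> {0..1} \<Longrightarrow> cmod (f t) \<le> K"
  shows "f \<in> L2_01"
proof (rule L2_01I)
  show "f \<in> borel_measurable M" by fact
  show "integrable M (\<lambda>t. (cmod (f t))\<^sup>2)"
  proof (rule Bochner_Integration.integrable_bound)
    show "integrable M (\<lambda>t. K^2)" by simp
    show "(\<lambda>t. (cmod (f t))\<^sup>2) \<in> borel_measurable M" using assms(1) by measurable
    show "AE x in M. norm ((cmod (f x))\<^sup>2) \<le> norm (K^2)"
      using assms(2) by (intro AE_I') (auto intro!: power_mono simp: abs_le_square_iff)
  qed
qed

lemma L2_01_cong: assumes "f \<in> L2_01" "\<And>t. t \<in> {0..1} \<Longrightarrow> f t = g t" shows "g \<in> L2_01"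
proof (rule L2_01I)
  show "g \<in> borel_measurable M"
    using L2_01_measurable[OF assms(1)] by (subst measurable_cong[where g=f]) (auto simp: assms(2))
  show "integrable M (\<lambda>t. (cmod (g t))\<^sup>2)"
    using L2_01_integrable_sq[OF assms(1)]
    by (subst Bochner_Integration.integrable_cong[where g="\<lambda>t. (cmod (f t))\<^sup>2"]) (auto simp: assms(2))
qed

lemma L2_01_indicator:
  assumes "(indicator A :: real \<Rightarrow> real) \<in> borel_measurable M"
  shows "(\<lambda>t. complex_of_real (indicator A t)) \<in> L2_01"
proof (rule L2_01_bounded[where K=1])
  show "(\<lambda>t. complex_of_real (indicator A t)) \<in> borel_measurable M"
    using assms by measurable
qed (auto simp: indicator_def)

subsection \<open>Weighted norms\<close>

definition wnorm_sq :: "real \<Rightarrow> (real \<Rightarrow> complex) \<Rightarrow> real" where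
  "wnorm_sq s f = (\<integral>t. exp (-2 * s * t) * (cmod (f t))^2 \<partial>M)"

definition L1_norm :: "(real \<Rightarrow> complex) \<Rightarrow> real" where
  "L1_norm f = (\<integral>t. cmod (f t) \<partial>M)"

lemma L2_norm_eq_sqrt_wnorm_sq: "L2_norm f = sqrt (wnorm_sq 0 f)"
  by (simp add: L2_norm_def wnorm_sq_def)

lemma integrable_exp_weight:
  assumes "f \<in> L2_01" shows "integrable M (\<lambda>t. exp (-2 * s * t) * (cmod (f t))^2)"
proof (rule Bochner_Integration.integrable_bound)
  show "integrable M (\<lambda>t. exp (2 * \<bar>s\<bar>) * (cmod (f t))^2)" using L2_01_integrable_sq[OF assms] by simp
  show "(\<lambda>t. exp (-2 * s * t) * (cmod (f t))^2) \<in> borel_measurable M"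
    using L2_01_measurable[OF assms] by measurable
  have "-2 * s * x \<le> 2 * \<bar>s\<bar>" if "x \<in> {0..1}" for x
  proof -
    have "- s * x \<le> \<bar>s\<bar> * x" using that by (intro mult_right_mono) auto
    moreover have "\<bar>s\<bar> * x \<le> \<bar>s\<bar>" using that by (simp add: mult_left_le)
    ultimately show ?thesis by linarith
  qed
  then show "AE x in M. norm (exp (-2 * s * x) * (cmod (f x))^2) \<le> norm (exp (2 * \<bar>s\<bar>) * (cmod (f x))^2)"
    by (intro AE_I2) (simp add: abs_mult mult_right_mono)
qed

lemma wnorm_sq_nonneg: "0 \<le> wnorm_sq s f"
  unfolding wnorm_sq_def by (intro integral_nonneg_AE AE_I2) simp

lemma wnorm_sq_cong: "(\<And>t. t \<in> {0..1} \<Longrightarrow> f t = g t) \<Longrightarrow> wnorm_sq s f = wnorm_sq s g"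
  unfolding wnorm_sq_def by (rule Bochner_Integration.integral_cong) auto

lemma wnorm_sq_cong_AE:
  "f \<in> borel_measurable M \<Longrightarrow> g \<in> borel_measurable M \<Longrightarrow> AE t in M. f t = g t \<Longrightarrow>
    wnorm_sq s f = wnorm_sq s g"
  unfolding wnorm_sq_def by (intro integral_cong_AE) (auto elim: AE_mp)

lemma wnorm_sq_scale: "wnorm_sq s (\<lambda>t. a * f t) = (cmod a)^2 * wnorm_sq s f"
  unfolding wnorm_sq_def by (simp add: norm_mult power_mult_distrib mult.left_commute)

lemma wnorm_sq_add_le:
  assumes "f \<in> L2_01" "g \<in> L2_01"
  shows "wnorm_sq s (\<lambda>t. f t + g t) \<le> 2 * wnorm_sq s f + 2 * wnorm_sq s g"
proof -
  have "wnorm_sq s (\<lambda>t. f t + g t)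
      \<le> (\<integral>t. 2 * (exp (-2 * s * t) * (cmod (f t))^2) + 2 * (exp (-2 * s * t) * (cmod (g t))^2) \<partial>M)"
    unfolding wnorm_sq_def
  proof (rule integral_mono)
    show "integrable M (\<lambda>t. exp (-2 * s * t) * (cmod (f t + g t))^2)"
      using integrable_exp_weight[OF L2_01_add[OF assms]] .
    show "integrable M (\<lambda>t. 2 * (exp (-2 * s * t) * (cmod (f t))^2) + 2 * (exp (-2 * s * t) * (cmod (g t))^2))"
      using integrable_exp_weight[OF assms(1)] integrable_exp_weight[OF assms(2)] by simp
    fix t
    show "exp (-2 * s * t) * (cmod (f t + g t))^2
        \<le> 2 * (exp (-2 * s * t) * (cmod (f t))^2) + 2 * (exp (-2 * s * t) * (cmod (g t))^2)"
      using mult_left_mono[OF cmod_add_sq_le[of "f t" "g t"], of "exp (-2 * s * t)"]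
      by (simp add: algebra_simps)
  qed
  also have "\<dots> = 2 * wnorm_sq s f + 2 * wnorm_sq s g"
    unfolding wnorm_sq_def using integrable_exp_weight[OF assms(1)] integrable_exp_weight[OF assms(2)] by simp
  finally show ?thesis .
qed

lemma wnorm_sq_le_wnorm_sq_0: assumes "f \<in> L2_01" "s \<ge> 0" shows "wnorm_sq s f \<le> wnorm_sq 0 f"
  unfolding wnorm_sq_def
proof (rule integral_mono)
  show "integrable M (\<lambda>t. exp (-2 * s * t) * (cmod (f t))^2)" using integrable_exp_weight[OF assms(1)] .
  show "integrable M (\<lambda>t. exp (-2 * 0 * t) * (cmod (f t))^2)" using integrable_exp_weight[OF assms(1)] .
  fix t assume "t \<in> space M"
  then have "exp (-2 * s * t) \<le> 1" using assms(2) by simp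
  then show "exp (-2 * s * t) * (cmod (f t))^2 \<le> exp (-2 * 0 * t) * (cmod (f t))^2"
    by (simp add: mult_left_le_one_le)
qed

lemma wnorm_sq_0_le: assumes "f \<in> L2_01" "s \<ge> 0" shows "wnorm_sq 0 f \<le> exp (2 * s) * wnorm_sq s f"
proof -
  have "wnorm_sq 0 f \<le> (\<integral>t. exp (2 * s) * (exp (-2 * s * t) * (cmod (f t))^2) \<partial>M)"
    unfolding wnorm_sq_def
  proof (rule integral_mono)
    show "integrable M (\<lambda>t. exp (-2 * 0 * t) * (cmod (f t))^2)" using integrable_exp_weight[OF assms(1)] .
    show "integrable M (\<lambda>t. exp (2 * s) * (exp (-2 * s * t) * (cmod (f t))^2))"
      using integrable_exp_weight[OF assms(1)] by simp
    fix t assume "t \<in> space M"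
    then have "1 \<le> exp (2 * s) * exp (-2 * s * t)"
      using assms(2) by (simp add: exp_add[symmetric] mult_left_le)
    from mult_right_mono[OF this, of "(cmod (f t))^2"]
    show "exp (-2 * 0 * t) * (cmod (f t))^2 \<le> exp (2 * s) * (exp (-2 * s * t) * (cmod (f t))^2)"
      by (simp add: mult.assoc)
  qed
  also have "\<dots> = exp (2 * s) * wnorm_sq s f" unfolding wnorm_sq_def by simp
  finally show ?thesis .
qed

lemma wnorm_sq_0_eq_0_imp_AE_zero:
  assumes "f \<in> L2_01" "wnorm_sq 0 f \<le> 0" shows "AE t in M. f t = 0"
proof -
  have "wnorm_sq 0 f = 0" using assms(2) wnorm_sq_nonneg[of 0 f] by linarith
  then have "(\<integral>t. (cmod (f t))^2 \<partial>M) = 0" by (simp add: wnorm_sq_def)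
  then have "AE t in M. (cmod (f t))^2 = 0"
    using integral_nonneg_eq_0_iff_AE[OF L2_01_integrable_sq[OF assms(1)]] by simp
  then show ?thesis by (rule AE_mp) (intro AE_I2, simp)
qed

lemma L1_norm_nonneg: "0 \<le> L1_norm f"
  unfolding L1_norm_def by simp

lemma L1_norm_le_sqrt_wnorm_sq_0: assumes "f \<in> L2_01" shows "L1_norm f \<le> sqrt (wnorm_sq 0 f)"
proof (rule real_le_rsqrt)
  define m where "m = L1_norm f"
  have "0 \<le> (\<integral>t. (cmod (f t) - m)^2 \<partial>M)" by simp
  also have "(\<integral>t. (cmod (f t) - m)^2 \<partial>M) = (\<integral>t. (cmod (f t))^2 - 2 * m * cmod (f t) + m^2 \<partial>M)"
    by (rule Bochner_Integration.integral_cong) (auto simp: power2_diff)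
  also have "\<dots> = wnorm_sq 0 f - m^2"
    using L2_01_integrable_sq[OF assms] L2_01_integrable_norm[OF assms]
    by (simp add: wnorm_sq_def m_def L1_norm_def power2_eq_square)
  finally show "(L1_norm f)^2 \<le> wnorm_sq 0 f" unfolding m_def by simp
qed

lemma L1_norm_triangle:
  assumes "f \<in> L2_01" "g \<in> L2_01" shows "L1_norm g \<le> L1_norm f + L1_norm (\<lambda>t. f t - g t)"
proof -
  have "L1_norm g \<le> (\<integral>t. cmod (f t) + cmod (f t - g t) \<partial>M)" unfolding L1_norm_def
  proof (rule integral_mono)
    show "integrable M (\<lambda>t. cmod (g t))" by (rule L2_01_integrable_norm[OF assms(2)])
    show "integrable M (\<lambda>t. cmod (f t) + cmod (f t - g t))"
      using L2_01_integrable_norm[OF assms(1)] L2_01_integrable_norm[OF L2_01_diff[OF assms]] by simp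
    show "cmod (g t) \<le> cmod (f t) + cmod (f t - g t)" for t
      using norm_triangle_ineq4[of "f t" "f t - g t"] by simp
  qed
  also have "\<dots> = L1_norm f + L1_norm (\<lambda>t. f t - g t)" unfolding L1_norm_def
    using L2_01_integrable_norm[OF assms(1)] L2_01_integrable_norm[OF L2_01_diff[OF assms]] by simp
  finally show ?thesis .
qed

lemma integrable_on_subinterval:
  "integrable M (f::real \<Rightarrow> 'a::euclidean_space) \<Longrightarrow> t \<le> 1 \<Longrightarrow> integrable (lebesgue_on {0..t}) f"
  by (rule integrable_subinterval) auto

lemma volterra_add:
  "integrable M (f::real \<Rightarrow> complex) \<Longrightarrow> integrable M g \<Longrightarrow> t \<le> 1 \<Longrightarrow>
    volterra (\<lambda>x. f x + g x) t = volterra f t + volterra g t"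
  unfolding volterra_def
  by (rule Bochner_Integration.integral_add; rule integrable_on_subinterval; assumption)

lemma volterra_diff:
  "integrable M (f::real \<Rightarrow> complex) \<Longrightarrow> integrable M g \<Longrightarrow> t \<le> 1 \<Longrightarrow>
    volterra (\<lambda>x. f x - g x) t = volterra f t - volterra g t"
  unfolding volterra_def
  by (rule Bochner_Integration.integral_diff; rule integrable_on_subinterval; assumption)

lemma volterra_mult_left: "volterra (\<lambda>x. a * f x) t = a * volterra f t"
  unfolding volterra_def by (rule integral_mult_right_zero)

lemma volterra_cong: "(\<And>x. x \<in> {0..t} \<Longrightarrow> f x = g x) \<Longrightarrow> volterra f t = volterra g t"
  unfolding volterra_def by (rule Bochner_Integration.integral_cong) auto

lemma volterra_zero [simp]: "volterra (\<lambda>x. 0) t = 0"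
  unfolding volterra_def by simp

lemma integral_subinterval_le:
  fixes h :: "real \<Rightarrow> real"
  assumes "integrable M h" "\<And>x. 0 \<le> h x" "t \<le> 1"
  shows "integral\<^sup>L (lebesgue_on {0..t}) h \<le> integral\<^sup>L M h"
proof -
  have "integral\<^sup>L (lebesgue_on {0..t}) h = (\<integral>x. indicator {0..t} x *\<^sub>R h x \<partial>lebesgue)"
    by (rule integral_restrict_space) simp
  also have "\<dots> \<le> (\<integral>x. indicator {0..1} x *\<^sub>R h x \<partial>lebesgue)"
  proof (rule integral_mono)
    show "integrable lebesgue (\<lambda>x. indicator {0..t} x *\<^sub>R h x)"
      using integrable_on_subinterval[OF assms(1,3)] by (subst integrable_restrict_space[symmetric]) auto
    show "integrable lebesgue (\<lambda>x. indicator {0..1} x *\<^sub>R h x)"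
      using assms(1) by (subst integrable_restrict_space[symmetric]) auto
    show "indicator {0..t} x *\<^sub>R h x \<le> indicator {0..1} x *\<^sub>R h x" for x
      using assms(2)[of x] assms(3) by (auto simp: indicator_def)
  qed
  also have "\<dots> = integral\<^sup>L M h"
    by (rule integral_restrict_space[symmetric]) simp
  finally show ?thesis .
qed

lemma norm_volterra_le_L1_norm:
  assumes "integrable M f" "t \<le> 1" shows "cmod (volterra f t) \<le> L1_norm f"
proof -
  have "cmod (volterra f t) \<le> integral\<^sup>L (lebesgue_on {0..t}) (\<lambda>x. cmod (f x))"
    unfolding volterra_def by (rule integral_norm_bound)
  also have "\<dots> \<le> L1_norm f" unfolding L1_norm_def
    using assms by (intro integral_subinterval_le integrable_norm) auto
  finally show ?thesis .
qed

lemma volterra_continuous: "integrable M f \<Longrightarrow> continuous_on {0..1} (volterra f)"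
  unfolding volterra_def[abs_def] by (rule indefinite_integral_continuous_real[of 0 1 f])

lemma continuous_on_imp_integrable_M:
  "continuous_on {0..1} (g::real \<Rightarrow> 'a::euclidean_space) \<Longrightarrow> integrable M g"
  by (rule continuous_imp_integrable_real)

lemma continuous_on_imp_measurable_M:
  "continuous_on {0..1} (g::real \<Rightarrow> 'a::euclidean_space) \<Longrightarrow> g \<in> borel_measurable M"
  by (rule continuous_imp_measurable_on_sets_lebesgue) auto

lemma volterra_measurable: "integrable M f \<Longrightarrow> volterra f \<in> borel_measurable M"
  by (intro continuous_on_imp_measurable_M volterra_continuous)

lemma volterra_L2_01: assumes "f \<in> L2_01" shows "volterra f \<in> L2_01"
  using L2_01_integrable[OF assms]
  by (intro L2_01_bounded[where K = "L1_norm f"] volterra_measurable norm_volterra_le_L1_norm) auto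

lemma volterra_cong_AE:
  assumes "integrable M f" "integrable M g" "AE x in M. f x = g x" "t \<le> 1"
  shows "volterra f t = volterra g t"
proof -
  have "cmod (volterra (\<lambda>x. f x - g x) t) \<le> L1_norm (\<lambda>x. f x - g x)"
    using assms by (intro norm_volterra_le_L1_norm) auto
  also have "\<dots> = (\<integral>x. 0 \<partial>M)" unfolding L1_norm_def
    using assms by (intro integral_cong_AE) (auto elim!: AE_mp)
  finally show ?thesis using volterra_diff[OF assms(1,2,4)] by simp
qed

lemma volterra_eq_integral:
  assumes "continuous_on {0..1} g" "t \<in> {0..1}"
  shows "volterra g t = integral {0..t} g"
proof -
  have "continuous_on {0..t} g" using assms by (auto intro: continuous_on_subset)
  then have "integrable (lebesgue_on {0..t}) g" by (rule continuous_imp_integrable_real)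
  then show ?thesis unfolding volterra_def by (rule lebesgue_integral_eq_integral) simp
qed

lemma volterra_has_vector_derivative:
  assumes "continuous_on {0..1} g" "t \<in> {0..1}"
  shows "(volterra g has_vector_derivative g t) (at t within {0..1})"
proof (rule has_vector_derivative_transform[OF assms(2)])
  show "((\<lambda>u. integral {0..u} g) has_vector_derivative g t) (at t within {0..1})"
    by (rule integral_has_vector_derivative[OF assms])
  show "volterra g x = integral {0..x} g" if "x \<in> {0..1}" for x
    using volterra_eq_integral[OF assms(1) that] .
qed

lemma volterra_at_0: "continuous_on {0..1} g \<Longrightarrow> volterra g 0 = 0"
  using volterra_eq_integral[of g 0] by simp

subsection \<open>The range of the Volterra operator is dense\<close>

definition volterra_approximable :: "(real \<Rightarrow> complex) \<Rightarrow> bool" where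
  "volterra_approximable f \<longleftrightarrow> (\<forall>e>0. \<exists>u\<in>L2_01. wnorm_sq 0 (\<lambda>t. f t - volterra u t) < e)"

lemma volterra_approximableD:
  "volterra_approximable f \<Longrightarrow> e > 0 \<Longrightarrow> \<exists>u\<in>L2_01. wnorm_sq 0 (\<lambda>t. f t - volterra u t) < e"
  unfolding volterra_approximable_def by blast

lemma volterra_approximable_cong_AE:
  assumes "volterra_approximable f" "f \<in> borel_measurable M" "g \<in> borel_measurable M"
    "AE t in M. f t = g t"
  shows "volterra_approximable g"
  unfolding volterra_approximable_def
proof (intro allI impI)
  fix e :: real assume "e > 0"
  then obtain u where u: "u \<in> L2_01" "wnorm_sq 0 (\<lambda>t. f t - volterra u t) < e"
    using volterra_approximableD[OF assms(1)] by blast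
  have "volterra u \<in> borel_measurable M" using volterra_measurable[OF L2_01_integrable[OF u(1)]] .
  then have "wnorm_sq 0 (\<lambda>t. g t - volterra u t) = wnorm_sq 0 (\<lambda>t. f t - volterra u t)"
    using assms(2-4) by (intro wnorm_sq_cong_AE) (auto elim!: AE_mp)
  then show "\<exists>u\<in>L2_01. wnorm_sq 0 (\<lambda>t. g t - volterra u t) < e"
    using u by (intro bexI[of _ u]) simp_all
qed

lemma volterra_approximable_cong:
  assumes "volterra_approximable f" "f \<in> L2_01" "\<And>t. t \<in> {0..1} \<Longrightarrow> f t = g t"
  shows "volterra_approximable g"
proof (rule volterra_approximable_cong_AE[OF assms(1)])
  show "f \<in> borel_measurable M" using L2_01_measurable[OF assms(2)] .
  show "g \<in> borel_measurable M" using L2_01_measurable[OF L2_01_cong[OF assms(2,3)]] .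
  show "AE t in M. f t = g t" using assms(3) by (intro AE_I2) simp
qed

lemma volterra_approximable_volterra: "u \<in> L2_01 \<Longrightarrow> volterra_approximable (volterra u)"
  unfolding volterra_approximable_def by (auto intro!: bexI[of _ u] simp: wnorm_sq_def)

lemma volterra_approximable_zero: "volterra_approximable (\<lambda>t. 0)"
proof -
  have "volterra (\<lambda>t. 0) = (\<lambda>t. 0)" by (rule ext) simp
  then show ?thesis using volterra_approximable_volterra[OF L2_01_zero] by simp
qed

lemma volterra_approximable_add:
  assumes "f \<in> L2_01" "g \<in> L2_01" "volterra_approximable f" "volterra_approximable g"
  shows "volterra_approximable (\<lambda>t. f t + g t)"
  unfolding volterra_approximable_def
proof (intro allI impI)
  fix e :: real assume "e > 0"
  then have e4: "e/4 > 0" by simp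
  obtain u where u: "u \<in> L2_01" "wnorm_sq 0 (\<lambda>t. f t - volterra u t) < e/4"
    using volterra_approximableD[OF assms(3) e4] by blast
  obtain v where v: "v \<in> L2_01" "wnorm_sq 0 (\<lambda>t. g t - volterra v t) < e/4"
    using volterra_approximableD[OF assms(4) e4] by blast
  have "wnorm_sq 0 (\<lambda>t. (f t + g t) - volterra (\<lambda>x. u x + v x) t)
      = wnorm_sq 0 (\<lambda>t. (f t - volterra u t) + (g t - volterra v t))"
    using L2_01_integrable[OF u(1)] L2_01_integrable[OF v(1)]
    by (intro wnorm_sq_cong) (auto simp: volterra_add)
  also have "\<dots> \<le> 2 * wnorm_sq 0 (\<lambda>t. f t - volterra u t) + 2 * wnorm_sq 0 (\<lambda>t. g t - volterra v t)"
    using assms u v by (intro wnorm_sq_add_le L2_01_diff volterra_L2_01)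
  also have "\<dots> < e" using u v by simp
  finally show "\<exists>w\<in>L2_01. wnorm_sq 0 (\<lambda>t. f t + g t - volterra w t) < e"
    using L2_01_add[OF u(1) v(1)] by blast
qed

lemma volterra_approximable_scale:
  assumes "volterra_approximable f" shows "volterra_approximable (\<lambda>t. a * f t)"
  unfolding volterra_approximable_def
proof (intro allI impI)
  fix e :: real assume e: "e > 0"
  have "(cmod a)^2 + 1 > 0" by (simp add: add_nonneg_pos)
  then obtain u where u: "u \<in> L2_01" "wnorm_sq 0 (\<lambda>t. f t - volterra u t) < e / ((cmod a)^2 + 1)"
    using volterra_approximableD[OF assms] e by (meson divide_pos_pos)
  have "wnorm_sq 0 (\<lambda>t. a * f t - volterra (\<lambda>x. a * u x) t) = (cmod a)^2 * wnorm_sq 0 (\<lambda>t. f t - volterra u t)"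
    by (simp add: volterra_mult_left algebra_simps flip: wnorm_sq_scale)
  also have "\<dots> \<le> ((cmod a)^2 + 1) * wnorm_sq 0 (\<lambda>t. f t - volterra u t)"
    using wnorm_sq_nonneg by (intro mult_right_mono) auto
  also have "\<dots> < e" using u(2) by (simp add: field_simps add_pos_nonneg)
  finally show "\<exists>w\<in>L2_01. wnorm_sq 0 (\<lambda>t. a * f t - volterra w t) < e"
    using L2_01_scale[OF u(1)] by blast
qed

lemma L2_01_sum: "finite I \<Longrightarrow> (\<And>i. i \<in> I \<Longrightarrow> F i \<in> L2_01) \<Longrightarrow> (\<lambda>t. \<Sum>i\<in>I. F i t) \<in> L2_01"
  by (induction I rule: finite_induct) (auto intro: L2_01_zero L2_01_add)

lemma volterra_approximable_sum:
  "finite I \<Longrightarrow> (\<And>i. i \<in> I \<Longrightarrow> F i \<in> L2_01) \<Longrightarrow> (\<And>i. i \<in> I \<Longrightarrow> volterra_approximable (F i)) \<Longrightarrow>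
    volterra_approximable (\<lambda>t. \<Sum>i\<in>I. F i t)"
proof (induction I rule: finite_induct)
  case empty
  then show ?case using volterra_approximable_zero by simp
next
  case (insert i I)
  then show ?case by (simp add: volterra_approximable_add L2_01_sum)
qed

lemma volterra_approximable_limit:
  assumes "f \<in> L2_01" "\<And>n. g n \<in> L2_01" "\<And>n. volterra_approximable (g n)"
    and lim: "(\<lambda>n. wnorm_sq 0 (\<lambda>t. f t - g n t)) \<longlonglongrightarrow> 0"
  shows "volterra_approximable f"
  unfolding volterra_approximable_def
proof (intro allI impI)
  fix e :: real assume "e > 0"
  then have e4: "e/4 > 0" by simp
  obtain N where "\<forall>n\<ge>N. norm (wnorm_sq 0 (\<lambda>t. f t - g n t) - 0) < e/4"
    using LIMSEQ_D[OF lim e4] by blast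
  then have N: "wnorm_sq 0 (\<lambda>t. f t - g N t) < e/4" by auto
  obtain u where u: "u \<in> L2_01" "wnorm_sq 0 (\<lambda>t. g N t - volterra u t) < e/4"
    using volterra_approximableD[OF assms(3)[of N] e4] by blast
  have "wnorm_sq 0 (\<lambda>t. f t - volterra u t) = wnorm_sq 0 (\<lambda>t. (f t - g N t) + (g N t - volterra u t))"
    by simp
  also have "\<dots> \<le> 2 * wnorm_sq 0 (\<lambda>t. f t - g N t) + 2 * wnorm_sq 0 (\<lambda>t. g N t - volterra u t)"
    using assms u by (intro wnorm_sq_add_le L2_01_diff volterra_L2_01)
  also have "\<dots> < e" using u N by simp
  finally show "\<exists>w\<in>L2_01. wnorm_sq 0 (\<lambda>t. f t - volterra w t) < e" using u(1) by blast
qed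

lemma wnorm_sq_0_dominated_convergence:
  assumes "f \<in> L2_01" "h \<in> L2_01" "\<And>n. g n \<in> borel_measurable M"
    and lim: "\<And>x. x \<in> {0..1} \<Longrightarrow> (\<lambda>n. g n x) \<longlonglongrightarrow> f x"
    and bound: "\<And>n x. x \<in> {0..1} \<Longrightarrow> cmod (g n x) \<le> cmod (h x)"
  shows "(\<lambda>n. wnorm_sq 0 (\<lambda>t. f t - g n t)) \<longlonglongrightarrow> 0"
proof -
  have "(\<lambda>n. \<integral>t. (cmod (f t - g n t))^2 \<partial>M) \<longlonglongrightarrow> (\<integral>t. 0 \<partial>M)"
  proof (rule integral_dominated_convergence[where w="\<lambda>t. 2 * (cmod (f t))^2 + 2 * (cmod (h t))^2"])
    show "(\<lambda>t. (cmod (f t - g n t))^2) \<in> borel_measurable M" for n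
      using L2_01_measurable[OF assms(1)] assms(3)[of n] by measurable
    show "integrable M (\<lambda>t. 2 * (cmod (f t))^2 + 2 * (cmod (h t))^2)"
      using L2_01_integrable_sq[OF assms(1)] L2_01_integrable_sq[OF assms(2)] by simp
    show "AE x in M. (\<lambda>n. (cmod (f x - g n x))^2) \<longlonglongrightarrow> 0"
    proof (rule AE_I2)
      fix x assume "x \<in> space M"
      then have "(\<lambda>n. f x - g n x) \<longlonglongrightarrow> f x - f x" by (intro tendsto_diff tendsto_const lim) simp
      then have "(\<lambda>n. (cmod (f x - g n x))^2) \<longlonglongrightarrow> (cmod (f x - f x))^2"
        by (intro tendsto_power tendsto_norm)
      then show "(\<lambda>n. (cmod (f x - g n x))^2) \<longlonglongrightarrow> 0" by simp
    qed
    show "AE x in M. norm ((cmod (f x - g n x))^2) \<le> 2 * (cmod (f x))^2 + 2 * (cmod (h x))^2" for n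
    proof (rule AE_I2)
      fix x assume "x \<in> space M"
      then have "(cmod (g n x))^2 \<le> (cmod (h x))^2" using bound by (intro power_mono) auto
      moreover have "(cmod (f x - g n x))^2 \<le> 2 * (cmod (f x))^2 + 2 * (cmod (g n x))^2"
        using cmod_add_sq_le[of "f x" "- g n x"] by simp
      ultimately show "norm ((cmod (f x - g n x))^2) \<le> 2 * (cmod (f x))^2 + 2 * (cmod (h x))^2"
        by (simp only: real_norm_def abs_power2)
    qed
  qed simp
  then show ?thesis by (simp add: wnorm_sq_def)
qed

lemma volterra_normalized_indicator:
  assumes "0 \<le> a" "\<delta> > 0"
  shows "volterra (\<lambda>s. complex_of_real (indicator {a..a+\<delta>} s / \<delta>)) t
    = of_real (max 0 (min (a+\<delta>) t - a) / \<delta>)"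
proof -
  have "volterra (\<lambda>s. complex_of_real (indicator {a..a+\<delta>} s / \<delta>)) t
      = of_real (measure (lebesgue_on {0..t}) ({a..a+\<delta>} \<inter> {0..t}) / \<delta>)"
    unfolding volterra_def by simp
  also have "measure (lebesgue_on {0..t}) ({a..a+\<delta>} \<inter> {0..t}) = measure lebesgue ({a..a+\<delta>} \<inter> {0..t})"
    by (rule measure_restrict_space) auto
  also have "{a..a+\<delta>} \<inter> {0..t} = {a..min (a+\<delta>) t}"
    by (rule set_eqI) (use assms in \<open>auto simp: min_def\<close>)
  also have "measure lebesgue {a..min (a+\<delta>) t} = max 0 (min (a+\<delta>) t - a)"
  proof (cases "a \<le> min (a+\<delta>) t")
    case False
    then have "t < a" using assms by auto
    then show ?thesis using False by (simp add: max_def min_def)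
  qed simp
  finally show ?thesis .
qed

text \<open>The jump of \<open>indicator {a<..}\<close> is approximated by the primitive of a tall thin box
  \<open>indicator {a..a+\<delta>} / \<delta>\<close>, which differs from it only on \<open>{a..a+\<delta>}\<close> and by at most \<open>1\<close>.\<close>

lemma indicator_greaterThan_minus_volterra_box:
  fixes a \<delta> t :: real
  assumes d: "\<delta> > 0" and t: "0 \<le> t"
  defines "a' \<equiv> max a 0"
  shows "(cmod (complex_of_real (indicator {a<..} t)
      - volterra (\<lambda>s. complex_of_real (indicator {a'..a'+\<delta>} s / \<delta>)) t))^2 \<le> indicator {a'..a'+\<delta>} t"
proof -
  let ?Vu = "volterra (\<lambda>s. complex_of_real (indicator {a'..a'+\<delta>} s / \<delta>)) t"
  have a': "0 \<le> a'" "a \<le> a'" by (auto simp: a'_def)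
  have Vu: "?Vu = of_real (max 0 (min (a'+\<delta>) t - a') / \<delta>)"
    by (rule volterra_normalized_indicator[OF a'(1) d])
  consider "t < a'" | "a' \<le> t" "t \<le> a'+\<delta>" | "a'+\<delta> < t" by linarith
  then show ?thesis
  proof cases
    case 1
    then have "t < a" using t by (auto simp: a'_def)
    then show ?thesis using 1 Vu by (simp add: indicator_def)
  next
    case 2
    have r: "0 \<le> (t - a') / \<delta>" "(t - a') / \<delta> \<le> 1" using 2 d by (auto simp: field_simps)
    have "max 0 (min (a'+\<delta>) t - a') = t - a'" using 2 by simp
    then have "complex_of_real (indicator {a<..} t) - ?Vu = of_real (indicator {a<..} t - (t - a')/\<delta>)"
      by (simp only: Vu of_real_diff)
    then have "cmod (complex_of_real (indicator {a<..} t) - ?Vu) = \<bar>indicator {a<..} t - (t - a')/\<delta>\<bar>"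
      by (simp only: norm_of_real)
    also have "\<dots> \<le> 1" using r by (auto simp: indicator_def)
    finally have "(cmod (complex_of_real (indicator {a<..} t) - ?Vu))^2 \<le> 1"
      by (simp add: power_le_one)
    then show ?thesis using 2 by simp
  next
    case 3
    then show ?thesis using Vu d a' by (simp add: indicator_def)
  qed
qed

lemma volterra_approximable_indicator_greaterThan:
  "volterra_approximable (\<lambda>t. complex_of_real (indicator {a<..} t))"
  unfolding volterra_approximable_def
proof (intro allI impI)
  fix e :: real assume e: "e > 0"
  define a' where "a' = max a 0"
  define \<delta> where "\<delta> = e / 2"
  have d: "\<delta> > 0" "\<delta> < e" using e by (auto simp: \<delta>_def)
  define u where "u = (\<lambda>s. complex_of_real (indicator {a'..a'+\<delta>} s / \<delta>))"
  have u: "u \<in> L2_01" unfolding u_def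
    by (rule L2_01_bounded[where K = "1/\<delta>"]) (use d in \<open>auto simp: indicator_def norm_divide\<close>)
  have "wnorm_sq 0 (\<lambda>t. complex_of_real (indicator {a<..} t) - volterra u t) \<le> (\<integral>t. indicator {a'..a'+\<delta>} t \<partial>M)"
    unfolding wnorm_sq_def
  proof (rule integral_mono)
    have "(\<lambda>t. complex_of_real (indicator {a<..} t)) \<in> L2_01" by (rule L2_01_indicator) measurable
    then show "integrable M (\<lambda>t. exp (-2 * 0 * t) * (cmod (complex_of_real (indicator {a<..} t) - volterra u t))\<^sup>2)"
      by (intro integrable_exp_weight L2_01_diff volterra_L2_01 u)
    show "integrable M (indicat_real {a'..a' + \<delta>})"
      by (rule finite_measure.integrable_const_bound[OF finite_measure_M, where B=1]) (auto simp: indicator_def)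
  qed (use indicator_greaterThan_minus_volterra_box[OF d(1)] in \<open>simp add: u_def a'_def\<close>)
  also have "\<dots> = measure lebesgue ({a'..a'+\<delta>} \<inter> {0..1})"
    by (simp add: measure_restrict_space)
  also have "\<dots> \<le> measure lebesgue {a'..a'+\<delta>}"
    by (rule measure_mono_fmeasurable) auto
  also have "\<dots> < e" using d by simp
  finally show "\<exists>u\<in>L2_01. wnorm_sq 0 (\<lambda>t. complex_of_real (indicator {a<..} t) - volterra u t) < e"
    using u by blast
qed

lemma indicator_borel_measurable_M:
  "A \<in> sets borel \<Longrightarrow> (indicator A :: real \<Rightarrow> real) \<in> borel_measurable M"
  by (rule measurable_compose[OF measurable_ident_lebesgue_on borel_measurable_indicator])

lemma volterra_approximable_indicator_disjoint_UN:
  fixes A :: "nat \<Rightarrow> real set"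
  assumes disj: "disjoint_family A" and borel: "\<And>i. A i \<in> sets borel"
    and approx: "\<And>i. volterra_approximable (\<lambda>t. complex_of_real (indicator (A i) t))"
  shows "volterra_approximable (\<lambda>t. complex_of_real (indicator (\<Union>i. A i) t))"
proof (rule volterra_approximable_limit)
  let ?P = "\<lambda>n t. complex_of_real (indicator (\<Union>i<n. A i) t)"
  show "(\<lambda>t. complex_of_real (indicator (\<Union>i. A i) t)) \<in> L2_01"
    using borel by (intro L2_01_indicator indicator_borel_measurable_M) auto
  show P: "?P n \<in> L2_01" for n
    using borel by (intro L2_01_indicator indicator_borel_measurable_M) auto
  have "?P n t = (\<Sum>i<n. complex_of_real (indicator (A i) t))" for n t
  proof -
    have "indicator (\<Union>i<n. A i) t = (\<Sum>i<n. (indicator (A i) t :: real))"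
      by (rule indicator_UN_disjoint) (use disj in \<open>auto simp: disjoint_family_on_def\<close>)
    then show ?thesis by simp
  qed
  moreover have "volterra_approximable (\<lambda>t. \<Sum>i<n. complex_of_real (indicator (A i) t))" for n
    using borel approx by (intro volterra_approximable_sum L2_01_indicator indicator_borel_measurable_M) auto
  ultimately show "volterra_approximable (?P n)" for n by simp
  show "(\<lambda>n. wnorm_sq 0 (\<lambda>t. complex_of_real (indicator (\<Union>i. A i) t) - ?P n t)) \<longlonglongrightarrow> 0"
  proof (rule wnorm_sq_0_dominated_convergence[where h="\<lambda>t. 1"])
    show "(\<lambda>t. 1) \<in> L2_01" by (rule L2_01_bounded[where K=1]) auto
    show "?P n \<in> borel_measurable M" for n by (rule L2_01_measurable[OF P])
    show "(\<lambda>n. ?P n x) \<longlonglongrightarrow> complex_of_real (indicator (\<Union>i. A i) x)" for x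
      by (intro tendsto_of_real LIMSEQ_indicator_UN)
    show "cmod (?P n x) \<le> cmod (1::complex)" for n x
      by (simp add: indicator_def)
  qed (use borel in \<open>intro L2_01_indicator indicator_borel_measurable_M; auto\<close>)
qed

lemma volterra_approximable_indicator_borel:
  "A \<in> sets borel \<Longrightarrow> volterra_approximable (\<lambda>t. complex_of_real (indicator A t))"
proof (induction rule: borel_set_induct)
  case empty
  show ?case using volterra_approximable_zero by simp
next
  case (interval a b)
  define g where "g t = complex_of_real (indicator {a<..} t) + (-1) * complex_of_real (indicator {b<..} t)" for t
  have L2: "(\<lambda>t. complex_of_real (indicator {a<..} t)) \<in> L2_01" "(\<lambda>t. complex_of_real (indicator {b<..} t)) \<in> L2_01"
    by (rule L2_01_indicator, measurable)+
  have "volterra_approximable g" unfolding g_def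
    by (intro volterra_approximable_add volterra_approximable_scale
        volterra_approximable_indicator_greaterThan L2_01_scale L2)
  moreover have "g \<in> borel_measurable M" unfolding g_def by measurable
  moreover have "(\<lambda>t. complex_of_real (indicator {a..b} t)) \<in> borel_measurable M" by measurable
  moreover have "AE t in M. g t = complex_of_real (indicator {a..b} t)"
    using AE_M_neq[of a] by (rule AE_mp) (use interval in \<open>auto intro!: AE_I2 simp: g_def indicator_def\<close>)
  ultimately show ?case by (rule volterra_approximable_cong_AE)
next
  case (compl A)
  have L2: "(\<lambda>t. complex_of_real (indicator {-1<..} t)) \<in> L2_01" "(\<lambda>t. complex_of_real (indicator A t)) \<in> L2_01"
    by (rule L2_01_indicator, measurable) (intro L2_01_indicator indicator_borel_measurable_M compl)
  then have "volterra_approximable (\<lambda>t. complex_of_real (indicator {-1<..} t) + (-1) * complex_of_real (indicator A t))"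
    by (intro volterra_approximable_add volterra_approximable_scale
        volterra_approximable_indicator_greaterThan compl L2_01_scale)
  then show ?case
    using L2_01_add[OF L2(1) L2_01_scale[OF L2(2)]]
    by (rule volterra_approximable_cong) (auto simp: indicator_def)
next
  case (union A)
  then show ?case by (rule volterra_approximable_indicator_disjoint_UN)
qed

lemma volterra_approximable_indicator:
  assumes "A \<in> sets M" shows "volterra_approximable (\<lambda>t. complex_of_real (indicator A t))"
proof -
  have "A \<in> sets lebesgue" using assms by (simp add: sets_restrict_space_iff)
  then obtain S N N' where A: "A = S \<union> N" "N \<subseteq> N'" "N' \<in> null_sets lborel" "S \<in> sets lborel"
    by (rule sets_completionE)
  have "AE x in lebesgue. x \<notin> N'" by (rule AE_completion[OF AE_not_in[OF A(3)]])
  then have "AE x in M. x \<notin> N'" by (subst AE_restrict_space_iff) (auto elim: AE_mp)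
  then have "AE t in M. complex_of_real (indicator S t) = complex_of_real (indicator A t)"
    by (rule AE_mp) (use A(1,2) in \<open>auto intro!: AE_I2 simp: indicator_def\<close>)
  moreover have "(\<lambda>t. complex_of_real (indicator S t)) \<in> borel_measurable M"
    using indicator_borel_measurable_M[of S] A(4) by measurable
  moreover have "(\<lambda>t. complex_of_real (indicator A t)) \<in> borel_measurable M"
    using assms by measurable
  ultimately show ?thesis
    using A(4) by (intro volterra_approximable_cong_AE[OF volterra_approximable_indicator_borel]) auto
qed

lemma volterra_approximable_simple_function:
  fixes s :: "real \<Rightarrow> complex"
  assumes "simple_function M s" shows "volterra_approximable s"
proof -
  define F where "F y t = y * complex_of_real (indicator (s -` {y} \<inter> space M) t)" for y t
  have sets: "s -` {y} \<inter> space M \<in> sets M" for y by (rule simple_functionD(2)[OF assms])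
  have F: "F y \<in> L2_01" "volterra_approximable (F y)" for y unfolding F_def
    by (intro L2_01_scale L2_01_indicator borel_measurable_indicator sets)
      (intro volterra_approximable_scale volterra_approximable_indicator sets)
  have eq: "(\<Sum>y\<in>s ` space M. F y t) = s t" if "t \<in> {0..1}" for t
  proof -
    have "s t = (\<Sum>y \<in> s ` space M. indicator (s -` {y} \<inter> space M) t *\<^sub>R y)"
      by (rule simple_function_indicator_representation_banach[OF assms]) (use that in simp)
    also have "\<dots> = (\<Sum>y\<in>s ` space M. F y t)"
      by (rule sum.cong[OF refl]) (simp add: F_def scaleR_conv_of_real)
    finally show ?thesis by (rule sym)
  qed
  have fin: "finite (s ` space M)" using simple_functionD(1)[OF assms] .
  show ?thesis
    using volterra_approximable_sum[OF fin F] L2_01_sum[OF fin F(1)]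
    by (rule volterra_approximable_cong) (rule eq)
qed

theorem volterra_approximable: assumes "f \<in> L2_01" shows "volterra_approximable f"
proof -
  obtain s where s: "\<And>i. simple_function M (s i)" "\<And>x. x \<in> space M \<Longrightarrow> (\<lambda>i. s i x) \<longlonglongrightarrow> f x"
    "\<And>i x. x \<in> space M \<Longrightarrow> dist (s i x) 0 \<le> 2 * dist (f x) 0"
    using borel_measurable_implies_sequence_metric[OF L2_01_measurable[OF assms], of 0] by blast
  have sL2: "s i \<in> L2_01" for i
  proof (rule L2_01I)
    show "s i \<in> borel_measurable M" using s(1) by (rule borel_measurable_simple_function)
    show "integrable M (\<lambda>t. (cmod (s i t))\<^sup>2)"
    proof (rule Bochner_Integration.integrable_bound)
      show "integrable M (\<lambda>t. 4 * (cmod (f t))\<^sup>2)" using L2_01_integrable_sq[OF assms] by simp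
      show "(\<lambda>t. (cmod (s i t))\<^sup>2) \<in> borel_measurable M"
        using borel_measurable_simple_function[OF s(1)] by measurable
      show "AE t in M. norm ((cmod (s i t))\<^sup>2) \<le> norm (4 * (cmod (f t))\<^sup>2)"
      proof (rule AE_I2)
        fix t assume "t \<in> space M"
        then have "cmod (s i t) \<le> 2 * cmod (f t)" using s(3) by (simp add: dist_norm)
        then have "(cmod (s i t))\<^sup>2 \<le> (2 * cmod (f t))\<^sup>2" by (intro power_mono) auto
        then show "norm ((cmod (s i t))\<^sup>2) \<le> norm (4 * (cmod (f t))\<^sup>2)"
          by (simp add: power_mult_distrib)
      qed
    qed
  qed
  show ?thesis
  proof (rule volterra_approximable_limit[OF assms sL2 volterra_approximable_simple_function[OF s(1)]])
    show "(\<lambda>n. wnorm_sq 0 (\<lambda>t. f t - s n t)) \<longlonglongrightarrow> 0"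
    proof (rule wnorm_sq_0_dominated_convergence[where h="\<lambda>t. 2 * f t"])
      show "(\<lambda>t. 2 * f t) \<in> L2_01" by (rule L2_01_scale[OF assms])
      show "s n \<in> borel_measurable M" for n by (rule L2_01_measurable[OF sL2])
      show "(\<lambda>n. s n x) \<longlonglongrightarrow> f x" if "x \<in> {0..1}" for x using s(2) that by simp
      show "cmod (s n x) \<le> cmod (2 * f x)" if "x \<in> {0..1}" for n x
        using s(3)[of x n] that by (simp add: dist_norm norm_mult)
    qed (rule assms)
  qed
qed

text \<open>Identities that are continuous with respect to the \<open>L_1\<close> norm extend from the range of \<open>V\<close>
  to all of \<open>L2_01\<close>, since \<open>L1_norm\<close> is dominated by the \<open>L_2\<close> norm.\<close>

lemma eq_zero_by_volterra_density:
  fixes D :: "(real \<Rightarrow> complex) \<Rightarrow> 'a::real_normed_vector"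
  assumes g: "g \<in> L2_01"
    and zero: "\<And>u. u \<in> L2_01 \<Longrightarrow> D (volterra u) = 0"
    and lipschitz: "\<And>h. h \<in> L2_01 \<Longrightarrow> L1_norm (\<lambda>t. g t - h t) \<le> 1 \<Longrightarrow>
      norm (D g - D h) \<le> K * L1_norm (\<lambda>t. g t - h t)"
  shows "D g = 0"
proof (rule ccontr)
  assume "D g \<noteq> 0"
  define \<epsilon> where "\<epsilon> = norm (D g)"
  define \<eta> where "\<eta> = min 1 (\<epsilon> / (2 * (\<bar>K\<bar> + 1)))"
  have "\<epsilon> > 0" using \<open>D g \<noteq> 0\<close> by (simp add: \<epsilon>_def)
  have \<eta>: "0 < \<eta>" "\<eta> \<le> 1" using \<open>\<epsilon> > 0\<close> by (simp_all add: \<eta>_def)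
  have "\<bar>K\<bar> * \<eta> \<le> \<bar>K\<bar> * (\<epsilon> / (2 * (\<bar>K\<bar> + 1)))"
    unfolding \<eta>_def by (intro mult_left_mono) auto
  also have "\<dots> = \<bar>K\<bar> / (2 * (\<bar>K\<bar> + 1)) * \<epsilon>" by simp
  also have "\<dots> < 1 * \<epsilon>"
    using \<open>\<epsilon> > 0\<close> by (intro mult_strict_right_mono) (auto simp: field_simps)
  finally have small: "\<bar>K\<bar> * \<eta> < \<epsilon>" by simp
  have "\<eta>^2 > 0" using \<eta>(1) by simp
  then obtain u where u: "u \<in> L2_01" "wnorm_sq 0 (\<lambda>t. g t - volterra u t) < \<eta>^2"
    using volterra_approximableD[OF volterra_approximable[OF g]] by blast
  have "L1_norm (\<lambda>t. g t - volterra u t) \<le> sqrt (wnorm_sq 0 (\<lambda>t. g t - volterra u t))"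
    by (intro L1_norm_le_sqrt_wnorm_sq_0 L2_01_diff g volterra_L2_01 u)
  also have "\<dots> < sqrt (\<eta>^2)" using u(2) by (rule real_sqrt_less_mono)
  also have "\<dots> = \<eta>" using \<eta>(1) by simp
  finally have close: "L1_norm (\<lambda>t. g t - volterra u t) < \<eta>" .
  have "\<epsilon> = norm (D g - D (volterra u))" using zero[OF u(1)] by (simp add: \<epsilon>_def)
  also have "\<dots> \<le> K * L1_norm (\<lambda>t. g t - volterra u t)"
    using close \<eta>(2) by (intro lipschitz volterra_L2_01 u) simp
  also have "\<dots> \<le> \<bar>K\<bar> * L1_norm (\<lambda>t. g t - volterra u t)"
    using L1_norm_nonneg by (intro mult_right_mono) auto
  also have "\<dots> \<le> \<bar>K\<bar> * \<eta>" using close by (intro mult_left_mono) auto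
  finally show False using small by simp
qed

subsection \<open>The energy identity\<close>

definition volterra_pairing :: "real \<Rightarrow> (real \<Rightarrow> complex) \<Rightarrow> real" where
  "volterra_pairing s g = (\<integral>t. exp (-2 * s * t) * (2 * Re (g t * cnj (volterra g t))) \<partial>M)"

definition volterra_energy :: "real \<Rightarrow> (real \<Rightarrow> complex) \<Rightarrow> real" where
  "volterra_energy s g = exp (-2 * s) * (cmod (volterra g 1))^2 + 2 * s * wnorm_sq s (volterra g)"

text \<open>Integration by parts: \<open>2 Re (g conj (V g))\<close> is the derivative of \<open>|V g|^2\<close>.\<close>

lemma volterra_pairing_eq_energy_continuous:
  fixes g :: "real \<Rightarrow> complex"
  assumes g: "continuous_on {0..1} g"
  shows "volterra_pairing s g = volterra_energy s g"
proof -
  define G where "G = volterra g"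
  have G: "continuous_on {0..1} G"
    unfolding G_def by (rule volterra_continuous[OF continuous_on_imp_integrable_M[OF g]])
  define F where "F t = exp (-2 * s * t) *\<^sub>R (G t * cnj (G t))" for t
  define F' where "F' t = exp (-2 * s * t) *\<^sub>R (G t * cnj (g t) + g t * cnj (G t))
    + (-2 * s * exp (-2 * s * t)) *\<^sub>R (G t * cnj (G t))" for t
  have "(F has_vector_derivative F' t) (at t within {0..1})" if t: "t \<in> {0..1}" for t
  proof -
    have dG: "(G has_vector_derivative g t) (at t within {0..1})"
      unfolding G_def by (rule volterra_has_vector_derivative[OF g t])
    have "((\<lambda>x. exp (-2 * s * x)) has_field_derivative (-2 * s * exp (-2 * s * t))) (at t within {0..1})"
      by (auto intro!: derivative_eq_intros)
    from has_vector_derivative_scaleR[OF this has_vector_derivative_mult[OF dG has_vector_derivative_cnj[OF dG]]]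
    show ?thesis unfolding F_def F'_def by simp
  qed
  then have "(F' has_integral (F 1 - F 0)) {0..1}"
    by (intro fundamental_theorem_of_calculus) auto
  moreover have "F 0 = 0" unfolding F_def G_def using volterra_at_0[OF g] by simp
  moreover have F': "continuous_on {0..1} F'" unfolding F'_def
    using g G by (intro continuous_intros) auto
  ultimately have "integral\<^sup>L M F' = F 1"
    using lebesgue_integral_eq_integral[OF continuous_on_imp_integrable_M[OF F']]
    by (simp add: integral_unique)
  then have "(\<integral>t. Re (F' t) \<partial>M) = Re (F 1)"
    using integral_Re[OF continuous_on_imp_integrable_M[OF F']] by simp
  also have "Re (F 1) = exp (-2 * s) * (cmod (G 1))^2"
    unfolding F_def by (simp add: complex_mult_cnj cmod_power2)
  also have "(\<integral>t. Re (F' t) \<partial>M) = (\<integral>t. exp (-2 * s * t) * (2 * Re (g t * cnj (G t))) \<partial>M)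
      - 2 * s * (\<integral>t. exp (-2 * s * t) * (cmod (G t))^2 \<partial>M)"
  proof -
    have "Re (F' t) = exp (-2 * s * t) * (2 * Re (g t * cnj (G t)))
        - 2 * s * (exp (-2 * s * t) * (cmod (G t))^2)" for t
      unfolding F'_def by (simp add: complex_mult_cnj cmod_power2 algebra_simps)
    moreover have "integrable M (\<lambda>t. exp (-2 * s * t) * (2 * Re (g t * cnj (G t))))"
      "integrable M (\<lambda>t. exp (-2 * s * t) * (cmod (G t))^2)"
      using g G by (intro continuous_on_imp_integrable_M continuous_intros; simp)+
    ultimately show ?thesis by simp
  qed
  finally show ?thesis
    unfolding volterra_pairing_def volterra_energy_def wnorm_sq_def G_def by simp
qed

lemma abs_weighted_Re_le:
  assumes "0 \<le> w" "w \<le> 1" shows "\<bar>w * (2 * Re z)\<bar> \<le> 2 * cmod z"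
proof -
  have "\<bar>w * (2 * Re z)\<bar> = w * (2 * \<bar>Re z\<bar>)" using assms by (simp add: abs_mult)
  also have "\<dots> \<le> 1 * (2 * cmod z)" using assms abs_Re_le_cmod[of z] by (intro mult_mono) auto
  finally show ?thesis by simp
qed

lemma integrable_volterra_pairing:
  assumes g: "g \<in> L2_01" and s: "s \<ge> 0"
  shows "integrable M (\<lambda>t. exp (-2 * s * t) * (2 * Re (g t * cnj (volterra g t))))"
proof (rule Bochner_Integration.integrable_bound)
  note [measurable] = L2_01_measurable[OF g] volterra_measurable[OF L2_01_integrable[OF g]]
  show "integrable M (\<lambda>t. 2 * L1_norm g * cmod (g t))" using L2_01_integrable_norm[OF g] by simp
  have "(\<lambda>t. exp (-2 * s * t) * (2 * (Re (g t) * Re (volterra g t) + Im (g t) * Im (volterra g t))))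
      \<in> borel_measurable M" by measurable
  then show "(\<lambda>t. exp (-2 * s * t) * (2 * Re (g t * cnj (volterra g t)))) \<in> borel_measurable M"
    by simp
  show "AE t in M. norm (exp (-2 * s * t) * (2 * Re (g t * cnj (volterra g t)))) \<le> norm (2 * L1_norm g * cmod (g t))"
  proof (rule AE_I2)
    fix t assume "t \<in> space M"
    then have t: "0 \<le> t" "t \<le> 1" by auto
    have "\<bar>exp (-2 * s * t) * (2 * Re (g t * cnj (volterra g t)))\<bar> \<le> 2 * cmod (g t * cnj (volterra g t))"
      using s t by (intro abs_weighted_Re_le) auto
    also have "\<dots> \<le> 2 * (cmod (g t) * L1_norm g)"
      using norm_volterra_le_L1_norm[OF L2_01_integrable[OF g] t(2)]
      by (simp add: norm_mult mult_left_mono)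
    finally show "norm (exp (-2 * s * t) * (2 * Re (g t * cnj (volterra g t)))) \<le> norm (2 * L1_norm g * cmod (g t))"
      using L1_norm_nonneg[of g] by (simp add: mult_ac)
  qed
qed

lemma abs_integral_diff_le:
  fixes f1 f2 h :: "real \<Rightarrow> real"
  assumes "integrable M f1" "integrable M f2" "integrable M h"
    and "\<And>t. t \<in> {0..1} \<Longrightarrow> \<bar>f1 t - f2 t\<bar> \<le> h t"
  shows "\<bar>integral\<^sup>L M f1 - integral\<^sup>L M f2\<bar> \<le> integral\<^sup>L M h"
proof -
  have "\<bar>integral\<^sup>L M f1 - integral\<^sup>L M f2\<bar> = \<bar>\<integral>t. f1 t - f2 t \<partial>M\<bar>" using assms(1,2) by simp
  also have "\<dots> \<le> (\<integral>t. \<bar>f1 t - f2 t\<bar> \<partial>M)" by (rule integral_abs_bound)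
  also have "\<dots> \<le> integral\<^sup>L M h"
    using assms by (intro integral_mono) auto
  finally show ?thesis .
qed

lemma volterra_pairing_lipschitz:
  assumes g: "g \<in> L2_01" and h: "h \<in> L2_01" and s: "s \<ge> 0"
  shows "\<bar>volterra_pairing s g - volterra_pairing s h\<bar>
    \<le> 2 * (L1_norm g + L1_norm h) * L1_norm (\<lambda>t. g t - h t)"
proof -
  define d where "d t = g t - h t" for t
  have d: "d \<in> L2_01" unfolding d_def by (rule L2_01_diff[OF g h])
  have "\<bar>volterra_pairing s g - volterra_pairing s h\<bar>
      \<le> (\<integral>t. 2 * L1_norm g * cmod (d t) + 2 * L1_norm d * cmod (h t) \<partial>M)"
    unfolding volterra_pairing_def
  proof (rule abs_integral_diff_le[OF integrable_volterra_pairing[OF g s] integrable_volterra_pairing[OF h s]])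
    show "integrable M (\<lambda>t. 2 * L1_norm g * cmod (d t) + 2 * L1_norm d * cmod (h t))"
      using L2_01_integrable_norm[OF d] L2_01_integrable_norm[OF h] by simp
    fix t :: real assume t: "t \<in> {0..1}"
    have Vd: "volterra g t - volterra h t = volterra d t"
      unfolding d_def using L2_01_integrable[OF g] L2_01_integrable[OF h] t
      by (intro volterra_diff[symmetric]) auto
    have "\<bar>exp (-2 * s * t) * (2 * Re (g t * cnj (volterra g t))) - exp (-2 * s * t) * (2 * Re (h t * cnj (volterra h t)))\<bar>
        = \<bar>exp (-2 * s * t) * (2 * Re (d t * cnj (volterra g t) + h t * cnj (volterra d t)))\<bar>"
      unfolding Vd[symmetric] by (simp add: d_def algebra_simps)
    also have "\<dots> \<le> 2 * cmod (d t * cnj (volterra g t) + h t * cnj (volterra d t))"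
      using s t by (intro abs_weighted_Re_le) auto
    also have "\<dots> \<le> 2 * (cmod (d t) * cmod (volterra g t) + cmod (h t) * cmod (volterra d t))"
      using norm_triangle_ineq[of "d t * cnj (volterra g t)" "h t * cnj (volterra d t)"] by (simp add: norm_mult)
    also have "\<dots> \<le> 2 * (cmod (d t) * L1_norm g + cmod (h t) * L1_norm d)"
      using t norm_volterra_le_L1_norm[OF L2_01_integrable[OF g]] norm_volterra_le_L1_norm[OF L2_01_integrable[OF d]]
      by (intro mult_left_mono add_mono) auto
    finally show "\<bar>exp (-2 * s * t) * (2 * Re (g t * cnj (volterra g t))) - exp (-2 * s * t) * (2 * Re (h t * cnj (volterra h t)))\<bar>
        \<le> 2 * L1_norm g * cmod (d t) + 2 * L1_norm d * cmod (h t)" by (simp add: algebra_simps)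
  qed
  also have "\<dots> = 2 * (L1_norm g + L1_norm h) * L1_norm d"
    using L2_01_integrable_norm[OF d] L2_01_integrable_norm[OF h] unfolding L1_norm_def by (simp add: algebra_simps)
  finally show ?thesis unfolding d_def .
qed

lemma abs_cmod_sq_diff_le: "\<bar>(cmod x)^2 - (cmod y)^2\<bar> \<le> (cmod x + cmod y) * cmod (x - y)"
proof -
  have "(cmod x)^2 - (cmod y)^2 = (cmod x + cmod y) * (cmod x - cmod y)"
    by (simp add: power2_eq_square algebra_simps)
  then have "\<bar>(cmod x)^2 - (cmod y)^2\<bar> = (cmod x + cmod y) * \<bar>cmod x - cmod y\<bar>"
    by (simp add: abs_mult)
  also have "\<dots> \<le> (cmod x + cmod y) * cmod (x - y)"
    by (intro mult_left_mono norm_triangle_ineq3) auto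
  finally show ?thesis .
qed

lemma abs_weighted_cmod_volterra_sq_diff_le:
  assumes g: "g \<in> L2_01" and h: "h \<in> L2_01" and w: "0 \<le> w" "w \<le> 1" and t: "t \<in> {0..1}"
  shows "\<bar>w * (cmod (volterra g t))^2 - w * (cmod (volterra h t))^2\<bar>
    \<le> (L1_norm g + L1_norm h) * L1_norm (\<lambda>t. g t - h t)"
proof -
  define d where "d t = g t - h t" for t
  have d: "d \<in> L2_01" unfolding d_def by (rule L2_01_diff[OF g h])
  have "volterra g t - volterra h t = volterra d t"
    unfolding d_def using L2_01_integrable[OF g] L2_01_integrable[OF h] t
    by (intro volterra_diff[symmetric]) auto
  then have "\<bar>(cmod (volterra g t))^2 - (cmod (volterra h t))^2\<bar>
      \<le> (cmod (volterra g t) + cmod (volterra h t)) * cmod (volterra d t)"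
    using abs_cmod_sq_diff_le[of "volterra g t" "volterra h t"] by simp
  also have "\<dots> \<le> (L1_norm g + L1_norm h) * L1_norm d"
    using t norm_volterra_le_L1_norm[OF L2_01_integrable[OF g]] norm_volterra_le_L1_norm[OF L2_01_integrable[OF h]]
      norm_volterra_le_L1_norm[OF L2_01_integrable[OF d]]
    by (intro mult_mono add_mono add_nonneg_nonneg L1_norm_nonneg) auto
  finally have "w * \<bar>(cmod (volterra g t))^2 - (cmod (volterra h t))^2\<bar> \<le> 1 * ((L1_norm g + L1_norm h) * L1_norm d)"
    using w by (intro mult_mono) auto
  then show ?thesis unfolding d_def by (simp add: abs_mult w flip: right_diff_distrib)
qed

lemma volterra_energy_lipschitz:
  assumes g: "g \<in> L2_01" and h: "h \<in> L2_01" and s: "s \<ge> 0"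
  shows "\<bar>volterra_energy s g - volterra_energy s h\<bar>
    \<le> (1 + 2 * s) * (L1_norm g + L1_norm h) * L1_norm (\<lambda>t. g t - h t)"
proof -
  define B where "B = (L1_norm g + L1_norm h) * L1_norm (\<lambda>t. g t - h t)"
  define X where "X = exp (-2 * s) * (cmod (volterra g 1))^2 - exp (-2 * s) * (cmod (volterra h 1))^2"
  define Y where "Y = wnorm_sq s (volterra g) - wnorm_sq s (volterra h)"
  have X: "\<bar>X\<bar> \<le> B"
    unfolding X_def B_def using s by (intro abs_weighted_cmod_volterra_sq_diff_le g h) auto
  have "\<bar>Y\<bar> \<le> (\<integral>t. B \<partial>M)"
    unfolding Y_def wnorm_sq_def
  proof (rule abs_integral_diff_le)
    show "\<bar>exp (-2 * s * t) * (cmod (volterra g t))^2 - exp (-2 * s * t) * (cmod (volterra h t))^2\<bar> \<le> B"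
      if "t \<in> {0..1}" for t
      unfolding B_def using s that by (intro abs_weighted_cmod_volterra_sq_diff_le g h) auto
  qed (use integrable_exp_weight[OF volterra_L2_01[OF g]] integrable_exp_weight[OF volterra_L2_01[OF h]] in auto)
  then have Y: "\<bar>Y\<bar> \<le> B" by simp
  have "\<bar>volterra_energy s g - volterra_energy s h\<bar> = \<bar>X + 2 * s * Y\<bar>"
    unfolding volterra_energy_def X_def Y_def by (simp add: algebra_simps)
  also have "\<dots> \<le> \<bar>X\<bar> + 2 * s * \<bar>Y\<bar>" using s abs_triangle_ineq[of X "2 * s * Y"] by (simp add: abs_mult)
  also have "\<dots> \<le> B + 2 * s * B" using X Y s by (intro add_mono mult_left_mono) auto
  finally show ?thesis unfolding B_def by (simp add: algebra_simps)
qed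

theorem volterra_pairing_eq_energy:
  assumes g: "g \<in> L2_01" and s: "s \<ge> 0"
  shows "volterra_pairing s g = volterra_energy s g"
proof -
  have "volterra_pairing s g - volterra_energy s g = 0"
  proof (rule eq_zero_by_volterra_density[OF g])
    show "volterra_pairing s (volterra u) - volterra_energy s (volterra u) = 0" if "u \<in> L2_01" for u
      using volterra_pairing_eq_energy_continuous[OF volterra_continuous[OF L2_01_integrable[OF that]]]
      by simp
    fix h assume h: "h \<in> L2_01" and close: "L1_norm (\<lambda>t. g t - h t) \<le> 1"
    have "L1_norm h \<le> L1_norm g + 1"
      using L1_norm_triangle[OF g h] close by linarith
    then have "(3 + 2 * s) * (L1_norm g + L1_norm h) \<le> (3 + 2 * s) * (2 * L1_norm g + 1)"
      using s by (intro mult_left_mono) auto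
    then have "(3 + 2 * s) * (L1_norm g + L1_norm h) * L1_norm (\<lambda>t. g t - h t)
        \<le> (3 + 2 * s) * (2 * L1_norm g + 1) * L1_norm (\<lambda>t. g t - h t)"
      using L1_norm_nonneg by (rule mult_right_mono)
    moreover have "norm ((volterra_pairing s g - volterra_energy s g) - (volterra_pairing s h - volterra_energy s h))
        \<le> \<bar>volterra_pairing s g - volterra_pairing s h\<bar> + \<bar>volterra_energy s g - volterra_energy s h\<bar>"
      by simp
    moreover note volterra_pairing_lipschitz[OF g h s] volterra_energy_lipschitz[OF g h s]
    moreover have "2 * (L1_norm g + L1_norm h) * L1_norm (\<lambda>t. g t - h t)
        + (1 + 2 * s) * (L1_norm g + L1_norm h) * L1_norm (\<lambda>t. g t - h t)
        = (3 + 2 * s) * (L1_norm g + L1_norm h) * L1_norm (\<lambda>t. g t - h t)"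
      by (simp add: algebra_simps)
    ultimately show "norm ((volterra_pairing s g - volterra_energy s g) - (volterra_pairing s h - volterra_energy s h))
        \<le> (3 + 2 * s) * (2 * L1_norm g + 1) * L1_norm (\<lambda>t. g t - h t)"
      by linarith
  qed
  then show ?thesis by simp
qed

lemma cmod_add_mult_sq:
  "(cmod (x + complex_of_real r * y))^2 = (cmod x)^2 + r * (2 * Re (x * cnj y)) + r^2 * (cmod y)^2"
  unfolding cmod_power2 by (simp add: power2_eq_square algebra_simps)

lemma wnorm_sq_add_volterra:
  assumes x: "x \<in> L2_01" and s: "s \<ge> 0"
  shows "wnorm_sq s (\<lambda>t. x t + complex_of_real r * volterra x t)
    = wnorm_sq s x + r * volterra_pairing s x + r^2 * wnorm_sq s (volterra x)"
proof -
  have i1: "integrable M (\<lambda>t. exp (-2 * s * t) * (cmod (x t))^2)" by (rule integrable_exp_weight[OF x])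
  have i2: "integrable M (\<lambda>t. r * (exp (-2 * s * t) * (2 * Re (x t * cnj (volterra x t)))))"
    using integrable_volterra_pairing[OF x s] by simp
  have i3: "integrable M (\<lambda>t. r^2 * (exp (-2 * s * t) * (cmod (volterra x t))^2))"
    using integrable_exp_weight[OF volterra_L2_01[OF x]] by simp
  have "wnorm_sq s (\<lambda>t. x t + complex_of_real r * volterra x t)
      = (\<integral>t. exp (-2 * s * t) * (cmod (x t))^2 + r * (exp (-2 * s * t) * (2 * Re (x t * cnj (volterra x t))))
            + r^2 * (exp (-2 * s * t) * (cmod (volterra x t))^2) \<partial>M)"
    unfolding wnorm_sq_def by (rule Bochner_Integration.integral_cong[OF refl]) (simp add: cmod_add_mult_sq algebra_simps)
  also have "\<dots> = wnorm_sq s x + r * volterra_pairing s x + r^2 * wnorm_sq s (volterra x)"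
    using i1 i2 i3 unfolding wnorm_sq_def volterra_pairing_def by simp
  finally show ?thesis .
qed

text \<open>For the weight \<open>c\<close> the cross term \<open>-c volterra_pairing c x\<close> absorbs twice the quadratic term.\<close>

lemma wnorm_sq_I_minus_cV:
  assumes x: "x \<in> L2_01" and c: "c > 0"
  shows "wnorm_sq c (I_minus_cV c x) + c^2 * wnorm_sq c (volterra x) \<le> wnorm_sq c x"
proof -
  have "wnorm_sq c (I_minus_cV c x) = wnorm_sq c x - c * volterra_pairing c x + c^2 * wnorm_sq c (volterra x)"
    unfolding I_minus_cV_def using wnorm_sq_add_volterra[OF x, of c "-c"] c by simp
  also have "volterra_pairing c x = exp (-2 * c) * (cmod (volterra x 1))^2 + 2 * c * wnorm_sq c (volterra x)"
    using volterra_pairing_eq_energy[OF x] c unfolding volterra_energy_def by simp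
  finally have "wnorm_sq c (I_minus_cV c x)
      = wnorm_sq c x - c * exp (-2 * c) * (cmod (volterra x 1))^2 - c^2 * wnorm_sq c (volterra x)"
    by (simp add: algebra_simps power2_eq_square)
  moreover have "0 \<le> c * exp (-2 * c) * (cmod (volterra x 1))^2" using c by simp
  ultimately show ?thesis by linarith
qed

lemma wnorm_sq_I_plus_cV:
  assumes x: "x \<in> L2_01" and c: "c \<ge> 0"
  shows "wnorm_sq 0 x + c^2 * wnorm_sq 0 (volterra x) \<le> wnorm_sq 0 (\<lambda>t. x t + complex_of_real c * volterra x t)"
proof -
  have "volterra_pairing 0 x = (cmod (volterra x 1))^2"
    using volterra_pairing_eq_energy[OF x, of 0] unfolding volterra_energy_def by simp
  then show ?thesis using wnorm_sq_add_volterra[OF x, of 0 c] c by simp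
qed

lemma tendsto_zero_if_telescoping:
  fixes x y :: "nat \<Rightarrow> real"
  assumes step: "\<And>n. x (Suc n) + y n \<le> x n" and "\<And>n. 0 \<le> x n" "\<And>n. 0 \<le> y n"
  shows "y \<longlonglongrightarrow> 0"
proof (rule summable_LIMSEQ_zero)
  have partial: "x n + (\<Sum>k<n. y k) \<le> x 0" for n
  proof (induction n)
    case (Suc n)
    then show ?case using step[of n] by simp
  qed simp
  have "(\<Sum>k<n. y k) \<le> x 0" for n using partial[of n] assms(2)[of n] by linarith
  then show "summable y" using assms(3) by (intro summableI_nonneg_bounded)
qed

lemma wnorm_sq_tendsto_zero_by_density:
  fixes T :: "nat \<Rightarrow> (real \<Rightarrow> complex) \<Rightarrow> real \<Rightarrow> complex"
  assumes s: "s \<ge> 0" and f: "f \<in> L2_01"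
    and L2: "\<And>n g. g \<in> L2_01 \<Longrightarrow> T n g \<in> L2_01"
    and nonexpansive: "\<And>n g h. g \<in> L2_01 \<Longrightarrow> h \<in> L2_01 \<Longrightarrow>
      wnorm_sq s (\<lambda>t. T n g t - T n h t) \<le> wnorm_sq s (\<lambda>t. g t - h t)"
    and range: "\<And>u. u \<in> L2_01 \<Longrightarrow> (\<lambda>n. wnorm_sq s (T n (volterra u))) \<longlonglongrightarrow> 0"
  shows "(\<lambda>n. wnorm_sq s (T n f)) \<longlonglongrightarrow> 0"
proof (rule LIMSEQ_I)
  fix r :: real assume "r > 0"
  then have r4: "r / 4 > 0" by simp
  obtain u where u: "u \<in> L2_01" "wnorm_sq 0 (\<lambda>t. f t - volterra u t) < r / 4"
    using volterra_approximableD[OF volterra_approximable[OF f] r4] by blast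
  have Vu: "volterra u \<in> L2_01" by (rule volterra_L2_01[OF u(1)])
  obtain N where N: "\<forall>n\<ge>N. norm (wnorm_sq s (T n (volterra u)) - 0) < r / 4"
    using LIMSEQ_D[OF range[OF u(1)] r4] by blast
  have "wnorm_sq s (T n f) < r" if "n \<ge> N" for n
  proof -
    have "wnorm_sq s (T n f) = wnorm_sq s (\<lambda>t. (T n f t - T n (volterra u) t) + T n (volterra u) t)"
      by simp
    also have "\<dots> \<le> 2 * wnorm_sq s (\<lambda>t. T n f t - T n (volterra u) t) + 2 * wnorm_sq s (T n (volterra u))"
      using f Vu by (intro wnorm_sq_add_le L2_01_diff L2)
    also have "wnorm_sq s (\<lambda>t. T n f t - T n (volterra u) t) \<le> wnorm_sq 0 (\<lambda>t. f t - volterra u t)"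
      using nonexpansive[OF f Vu] wnorm_sq_le_wnorm_sq_0[OF L2_01_diff[OF f Vu] s] by (rule order_trans)
    finally show ?thesis using u(2) N that wnorm_sq_nonneg[of s "T n (volterra u)"] by auto
  qed
  then show "\<exists>N. \<forall>n\<ge>N. norm (wnorm_sq s (T n f) - 0) < r"
    using wnorm_sq_nonneg by auto
qed

subsection \<open>Powers of \<open>I - c V\<close>\<close>

lemma I_minus_cV_L2_01: "g \<in> L2_01 \<Longrightarrow> I_minus_cV c g \<in> L2_01"
  unfolding I_minus_cV_def by (intro L2_01_diff L2_01_scale volterra_L2_01)

lemma funpow_I_minus_cV_L2_01: "f \<in> L2_01 \<Longrightarrow> (I_minus_cV c ^^ n) f \<in> L2_01"
  by (induction n) (simp_all add: I_minus_cV_L2_01)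

lemma funpow_I_minus_cV_Suc:
  "(I_minus_cV c ^^ Suc n) f t = (I_minus_cV c ^^ n) f t - complex_of_real c * volterra ((I_minus_cV c ^^ n) f) t"
  by (simp add: I_minus_cV_def)

lemma funpow_I_minus_cV_diff:
  assumes f: "f \<in> L2_01" and h: "h \<in> L2_01" and t: "t \<in> {0..1}"
  shows "(I_minus_cV c ^^ n) (\<lambda>s. f s - h s) t = (I_minus_cV c ^^ n) f t - (I_minus_cV c ^^ n) h t"
  using t
proof (induction n arbitrary: t)
  case (Suc n)
  let ?X = "(I_minus_cV c ^^ n) (\<lambda>s. f s - h s)" and ?Y = "(I_minus_cV c ^^ n) f"
    and ?Z = "(I_minus_cV c ^^ n) h"
  have "volterra ?X t = volterra (\<lambda>s. ?Y s - ?Z s) t"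
    by (rule volterra_cong) (use Suc in auto)
  also have "\<dots> = volterra ?Y t - volterra ?Z t"
    using Suc.prems L2_01_integrable[OF funpow_I_minus_cV_L2_01[OF f]]
      L2_01_integrable[OF funpow_I_minus_cV_L2_01[OF h]] by (intro volterra_diff) auto
  finally have V: "volterra ?X t = volterra ?Y t - volterra ?Z t" .
  have "?X t - complex_of_real c * volterra ?X t
      = (?Y t - complex_of_real c * volterra ?Y t) - (?Z t - complex_of_real c * volterra ?Z t)"
    unfolding V Suc.IH[OF Suc.prems] by (simp add: algebra_simps)
  then show ?case by (simp only: funpow_I_minus_cV_Suc)
qed simp

lemma funpow_I_minus_cV_volterra:
  assumes u: "u \<in> L2_01" and t: "t \<in> {0..1}"
  shows "(I_minus_cV c ^^ n) (volterra u) t = volterra ((I_minus_cV c ^^ n) u) t"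
  using t
proof (induction n arbitrary: t)
  case (Suc n)
  let ?X = "(I_minus_cV c ^^ n) u"
  have X: "?X \<in> L2_01" by (rule funpow_I_minus_cV_L2_01[OF u])
  have "volterra ((I_minus_cV c ^^ n) (volterra u)) t = volterra (volterra ?X) t"
    by (rule volterra_cong) (use Suc in auto)
  moreover have "volterra ((I_minus_cV c ^^ Suc n) u) t
      = volterra (\<lambda>s. ?X s - complex_of_real c * volterra ?X s) t"
    by (rule volterra_cong) (simp only: funpow_I_minus_cV_Suc)
  moreover have "\<dots> = volterra ?X t - complex_of_real c * volterra (volterra ?X) t"
    using Suc.prems L2_01_integrable[OF X] L2_01_integrable[OF L2_01_scale[OF volterra_L2_01[OF X]]]
    by (simp add: volterra_diff volterra_mult_left)
  ultimately show ?case
    using Suc.IH[OF Suc.prems] by (simp only: funpow_I_minus_cV_Suc)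
qed simp

lemma wnorm_sq_funpow_I_minus_cV_le:
  assumes f: "f \<in> L2_01" and c: "c > 0"
  shows "wnorm_sq c ((I_minus_cV c ^^ n) f) \<le> wnorm_sq c f"
proof (induction n)
  case (Suc n)
  have "wnorm_sq c ((I_minus_cV c ^^ Suc n) f) \<le> wnorm_sq c ((I_minus_cV c ^^ n) f)"
    using wnorm_sq_I_minus_cV[OF funpow_I_minus_cV_L2_01[OF f, of n c] c]
      mult_nonneg_nonneg[OF zero_le_power2[of c] wnorm_sq_nonneg[of c "volterra ((I_minus_cV c ^^ n) f)"]]
    by simp
  then show ?case using Suc.IH by simp
qed simp

lemma wnorm_sq_volterra_funpow_I_minus_cV:
  assumes f: "f \<in> L2_01" and c: "c > 0"
  shows "(\<lambda>n. wnorm_sq c (volterra ((I_minus_cV c ^^ n) f))) \<longlonglongrightarrow> 0"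
proof -
  have "(\<lambda>n. c^2 * wnorm_sq c (volterra ((I_minus_cV c ^^ n) f))) \<longlonglongrightarrow> 0"
    using wnorm_sq_I_minus_cV[OF funpow_I_minus_cV_L2_01[OF f] c]
    by (intro tendsto_zero_if_telescoping[where x="\<lambda>n. wnorm_sq c ((I_minus_cV c ^^ n) f)"])
      (simp_all add: wnorm_sq_nonneg)
  then have "(\<lambda>n. (1 / c^2) * (c^2 * wnorm_sq c (volterra ((I_minus_cV c ^^ n) f)))) \<longlonglongrightarrow> (1 / c^2) * 0"
    by (rule tendsto_mult_left)
  then show ?thesis using c by simp
qed

theorem L2_norm_funpow_I_minus_cV:
  assumes c: "c > 0" and f: "f \<in> L2_01"
  shows "(\<lambda>n. L2_norm ((I_minus_cV c ^^ n) f)) \<longlonglongrightarrow> 0"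
proof -
  have "(\<lambda>n. wnorm_sq c ((I_minus_cV c ^^ n) f)) \<longlonglongrightarrow> 0"
  proof (rule wnorm_sq_tendsto_zero_by_density[where T="\<lambda>n. I_minus_cV c ^^ n"])
    show "c \<ge> 0" "f \<in> L2_01" using c f by simp_all
    show "(I_minus_cV c ^^ n) g \<in> L2_01" if "g \<in> L2_01" for n g
      using that by (rule funpow_I_minus_cV_L2_01)
  next
    fix n g h assume g: "g \<in> L2_01" and h: "h \<in> L2_01"
    have "wnorm_sq c (\<lambda>t. (I_minus_cV c ^^ n) g t - (I_minus_cV c ^^ n) h t)
        = wnorm_sq c ((I_minus_cV c ^^ n) (\<lambda>t. g t - h t))"
      by (intro wnorm_sq_cong) (simp add: funpow_I_minus_cV_diff[OF g h])
    also have "\<dots> \<le> wnorm_sq c (\<lambda>t. g t - h t)"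
      by (intro wnorm_sq_funpow_I_minus_cV_le L2_01_diff g h c)
    finally show "wnorm_sq c (\<lambda>t. (I_minus_cV c ^^ n) g t - (I_minus_cV c ^^ n) h t)
        \<le> wnorm_sq c (\<lambda>t. g t - h t)" .
  next
    fix u assume u: "u \<in> L2_01"
    have "(\<lambda>n. wnorm_sq c ((I_minus_cV c ^^ n) (volterra u))) = (\<lambda>n. wnorm_sq c (volterra ((I_minus_cV c ^^ n) u)))"
      by (intro ext wnorm_sq_cong funpow_I_minus_cV_volterra[OF u])
    then show "(\<lambda>n. wnorm_sq c ((I_minus_cV c ^^ n) (volterra u))) \<longlonglongrightarrow> 0"
      using wnorm_sq_volterra_funpow_I_minus_cV[OF u c] by (simp only:)
  qed
  then have "(\<lambda>n. exp (2 * c) * wnorm_sq c ((I_minus_cV c ^^ n) f)) \<longlonglongrightarrow> exp (2 * c) * 0"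
    by (rule tendsto_mult_left)
  then have lim: "(\<lambda>n. exp (2 * c) * wnorm_sq c ((I_minus_cV c ^^ n) f)) \<longlonglongrightarrow> 0"
    by (simp only: mult_zero_right)
  have "\<forall>n. norm (wnorm_sq 0 ((I_minus_cV c ^^ n) f)) \<le> exp (2 * c) * wnorm_sq c ((I_minus_cV c ^^ n) f)"
    using wnorm_sq_0_le[OF funpow_I_minus_cV_L2_01[OF f]] c wnorm_sq_nonneg[of 0] by simp
  from Lim_null_comparison[OF always_eventually[OF this] lim]
  have "(\<lambda>n. wnorm_sq 0 ((I_minus_cV c ^^ n) f)) \<longlonglongrightarrow> 0" .
  then have "(\<lambda>n. sqrt (wnorm_sq 0 ((I_minus_cV c ^^ n) f))) \<longlonglongrightarrow> sqrt 0"
    by (rule tendsto_real_sqrt)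
  then show ?thesis by (simp add: L2_norm_eq_sqrt_wnorm_sq)
qed

subsection \<open>Solving \<open>g + c V g = h\<close>\<close>

definition exp_modulate :: "real \<Rightarrow> (real \<Rightarrow> complex) \<Rightarrow> real \<Rightarrow> complex" where
  "exp_modulate c h s = exp (c * s) *\<^sub>R h s"

text \<open>\<open>volterra_resolvent c h\<close> solves \<open>\<phi>' = h - c \<phi>\<close>, \<open>\<phi> 0 = 0\<close> by variation of constants, i.e.
  \<open>\<phi> + c V \<phi> = V h\<close>; then \<open>h - c \<phi>\<close> solves \<open>g + c V g = h\<close>.\<close>

definition volterra_resolvent :: "real \<Rightarrow> (real \<Rightarrow> complex) \<Rightarrow> real \<Rightarrow> complex" where
  "volterra_resolvent c h t = exp (- c * t) *\<^sub>R volterra (exp_modulate c h) t"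

lemma exp_mult_le_exp_abs: fixes c t :: real assumes "t \<in> {0..1}" shows "exp (c * t) \<le> exp \<bar>c\<bar>"
proof -
  have "c * t \<le> \<bar>c\<bar> * t" using assms by (intro mult_right_mono) auto
  also have "\<dots> \<le> \<bar>c\<bar>" using assms by (simp add: mult_left_le)
  finally show ?thesis by simp
qed

lemma exp_modulate_L2_01: assumes h: "h \<in> L2_01" shows "exp_modulate c h \<in> L2_01"
proof (rule L2_01I)
  note [measurable] = L2_01_measurable[OF h]
  show "exp_modulate c h \<in> borel_measurable M" unfolding exp_modulate_def[abs_def] by measurable
  show "integrable M (\<lambda>t. (cmod (exp_modulate c h t))\<^sup>2)"
  proof (rule Bochner_Integration.integrable_bound)
    show "integrable M (\<lambda>t. (exp \<bar>c\<bar>)^2 * (cmod (h t))^2)" using L2_01_integrable_sq[OF h] by simp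
    show "(\<lambda>t. (cmod (exp_modulate c h t))\<^sup>2) \<in> borel_measurable M" unfolding exp_modulate_def by measurable
    show "AE t in M. norm ((cmod (exp_modulate c h t))\<^sup>2) \<le> norm ((exp \<bar>c\<bar>)^2 * (cmod (h t))^2)"
    proof (rule AE_I2)
      fix t assume "t \<in> space M"
      then have "(exp (c * t))^2 \<le> (exp \<bar>c\<bar>)^2" by (intro power_mono exp_mult_le_exp_abs) auto
      then show "norm ((cmod (exp_modulate c h t))\<^sup>2) \<le> norm ((exp \<bar>c\<bar>)^2 * (cmod (h t))^2)"
        by (simp add: exp_modulate_def power_mult_distrib mult_right_mono)
    qed
  qed
qed

lemma L1_norm_exp_modulate_le: assumes h: "h \<in> L2_01" shows "L1_norm (exp_modulate c h) \<le> exp \<bar>c\<bar> * L1_norm h"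
proof -
  have "L1_norm (exp_modulate c h) \<le> (\<integral>t. exp \<bar>c\<bar> * cmod (h t) \<partial>M)" unfolding L1_norm_def
  proof (rule integral_mono)
    show "integrable M (\<lambda>t. cmod (exp_modulate c h t))" by (rule L2_01_integrable_norm[OF exp_modulate_L2_01[OF h]])
    show "integrable M (\<lambda>t. exp \<bar>c\<bar> * cmod (h t))" using L2_01_integrable_norm[OF h] by simp
    fix t assume "t \<in> space M"
    then have "exp (c * t) \<le> exp \<bar>c\<bar>" by (intro exp_mult_le_exp_abs) simp
    then show "cmod (exp_modulate c h t) \<le> exp \<bar>c\<bar> * cmod (h t)"
      unfolding exp_modulate_def by (simp add: mult_right_mono)
  qed
  also have "\<dots> = exp \<bar>c\<bar> * L1_norm h" unfolding L1_norm_def by simp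
  finally show ?thesis .
qed

lemma norm_volterra_resolvent_le:
  assumes h: "h \<in> L2_01" and t: "t \<in> {0..1}"
  shows "cmod (volterra_resolvent c h t) \<le> exp (2 * \<bar>c\<bar>) * L1_norm h"
proof -
  have "cmod (volterra (exp_modulate c h) t) \<le> L1_norm (exp_modulate c h)"
    using t by (intro norm_volterra_le_L1_norm L2_01_integrable exp_modulate_L2_01 h) simp
  also have "\<dots> \<le> exp \<bar>c\<bar> * L1_norm h" by (rule L1_norm_exp_modulate_le[OF h])
  finally have "cmod (volterra (exp_modulate c h) t) \<le> exp \<bar>c\<bar> * L1_norm h" .
  moreover have "exp (- c * t) \<le> exp \<bar>c\<bar>" using exp_mult_le_exp_abs[OF t, of "-c"] by simp
  ultimately have "exp (- c * t) * cmod (volterra (exp_modulate c h) t) \<le> exp \<bar>c\<bar> * (exp \<bar>c\<bar> * L1_norm h)"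
    by (intro mult_mono) auto
  also have "\<dots> = exp (\<bar>c\<bar> + \<bar>c\<bar>) * L1_norm h" by (simp only: exp_add mult.assoc)
  also have "\<dots> = exp (2 * \<bar>c\<bar>) * L1_norm h" by simp
  finally show ?thesis unfolding volterra_resolvent_def by simp
qed

lemma volterra_resolvent_continuous:
  assumes "h \<in> L2_01" shows "continuous_on {0..1} (volterra_resolvent c h)"
proof -
  have "continuous_on {0..1} (volterra (exp_modulate c h))"
    by (rule volterra_continuous[OF L2_01_integrable[OF exp_modulate_L2_01[OF assms]]])
  then show ?thesis unfolding volterra_resolvent_def[abs_def] by (intro continuous_intros)
qed

lemma volterra_resolvent_L2_01: assumes "h \<in> L2_01" shows "volterra_resolvent c h \<in> L2_01"
proof (rule L2_01_bounded)
  show "volterra_resolvent c h \<in> borel_measurable M"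
    by (rule continuous_on_imp_measurable_M[OF volterra_resolvent_continuous[OF assms]])
  show "cmod (volterra_resolvent c h t) \<le> exp (2 * \<bar>c\<bar>) * L1_norm h" if "t \<in> {0..1}" for t
    by (rule norm_volterra_resolvent_le[OF assms that])
qed

lemma volterra_resolvent_diff:
  assumes h1: "h1 \<in> L2_01" and h2: "h2 \<in> L2_01" and t: "t \<le> 1"
  shows "volterra_resolvent c (\<lambda>s. h1 s - h2 s) t = volterra_resolvent c h1 t - volterra_resolvent c h2 t"
proof -
  have "exp_modulate c (\<lambda>s. h1 s - h2 s) = (\<lambda>s. exp_modulate c h1 s - exp_modulate c h2 s)"
    unfolding exp_modulate_def by (rule ext) (simp add: scaleR_diff_right)
  then have "volterra (exp_modulate c (\<lambda>s. h1 s - h2 s)) t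
      = volterra (exp_modulate c h1) t - volterra (exp_modulate c h2) t"
    by (simp only:) (rule volterra_diff[OF L2_01_integrable[OF exp_modulate_L2_01[OF h1]]
        L2_01_integrable[OF exp_modulate_L2_01[OF h2]] t])
  then show ?thesis unfolding volterra_resolvent_def by (simp add: scaleR_diff_right)
qed

lemma volterra_resolvent_has_vector_derivative:
  assumes h: "continuous_on {0..1} h" and x: "x \<in> {0..1}"
  shows "(volterra_resolvent c h has_vector_derivative (h x - complex_of_real c * volterra_resolvent c h x))
    (at x within {0..1})"
proof -
  have eh: "continuous_on {0..1} (exp_modulate c h)"
    unfolding exp_modulate_def[abs_def] using h by (intro continuous_intros)
  have "((\<lambda>x. exp (- c * x)) has_field_derivative (- c * exp (- c * x))) (at x within {0..1})"
    by (auto intro!: derivative_eq_intros)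
  from has_vector_derivative_scaleR[OF this volterra_has_vector_derivative[OF eh x]]
  have "(volterra_resolvent c h has_vector_derivative
      (exp (- c * x) *\<^sub>R exp_modulate c h x + (- c * exp (- c * x)) *\<^sub>R volterra (exp_modulate c h) x))
      (at x within {0..1})"
    unfolding volterra_resolvent_def[abs_def] .
  moreover have "exp (- c * x) *\<^sub>R exp_modulate c h x = h x"
    unfolding exp_modulate_def by (simp add: mult_exp_exp)
  moreover have "(- c * exp (- c * x)) *\<^sub>R volterra (exp_modulate c h) x = - (complex_of_real c * volterra_resolvent c h x)"
    unfolding volterra_resolvent_def by (simp add: scaleR_conv_of_real)
  ultimately show ?thesis by simp
qed

lemma volterra_resolvent_eq_continuous:
  assumes h: "h \<in> L2_01" "continuous_on {0..1} h" and t: "t \<in> {0..1}"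
  shows "volterra_resolvent c h t = volterra h t - complex_of_real c * volterra (volterra_resolvent c h) t"
proof -
  let ?\<phi> = "volterra_resolvent c h"
  have \<phi>: "continuous_on {0..1} ?\<phi>" by (rule volterra_resolvent_continuous[OF h(1)])
  have t': "0 \<le> t" "t \<le> 1" using t by auto
  have "((\<lambda>x. h x - complex_of_real c * ?\<phi> x) has_integral (?\<phi> t - ?\<phi> 0)) {0..t}"
  proof (rule fundamental_theorem_of_calculus[OF t'(1)])
    fix x assume "x \<in> {0..t}"
    then have "x \<in> {0..1}" using t' by auto
    then show "(?\<phi> has_vector_derivative (h x - complex_of_real c * ?\<phi> x)) (at x within {0..t})"
      by (rule has_vector_derivative_within_subset[OF volterra_resolvent_has_vector_derivative[OF h(2)]])
        (use t' in auto)
  qed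
  moreover have "?\<phi> 0 = 0"
    using volterra_at_0[of "exp_modulate c h"] h(2)
    by (simp add: volterra_resolvent_def exp_modulate_def[abs_def] continuous_intros)
  moreover have g: "continuous_on {0..1} (\<lambda>x. h x - complex_of_real c * ?\<phi> x)"
    using h \<phi> by (intro continuous_intros)
  ultimately have "?\<phi> t = volterra (\<lambda>x. h x - complex_of_real c * ?\<phi> x) t"
    unfolding volterra_eq_integral[OF g t] by (simp add: integral_unique)
  also have "\<dots> = volterra h t - complex_of_real c * volterra ?\<phi> t"
    using volterra_diff[OF L2_01_integrable[OF h(1)] L2_01_integrable[OF L2_01_scale[OF volterra_resolvent_L2_01[OF h(1)]]] t'(2)]
    by (simp add: volterra_mult_left)
  finally show ?thesis .
qed

lemma norm_volterra_volterra_resolvent_le: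
  assumes h: "h \<in> L2_01" and t: "t \<le> 1"
  shows "cmod (volterra (volterra_resolvent c h) t) \<le> exp (2 * \<bar>c\<bar>) * L1_norm h"
proof -
  have "cmod (volterra (volterra_resolvent c h) t) \<le> L1_norm (volterra_resolvent c h)"
    by (rule norm_volterra_le_L1_norm[OF L2_01_integrable[OF volterra_resolvent_L2_01[OF h]] t])
  also have "\<dots> \<le> (\<integral>s. exp (2 * \<bar>c\<bar>) * L1_norm h \<partial>M)" unfolding L1_norm_def[of "volterra_resolvent c h"]
    using L2_01_integrable_norm[OF volterra_resolvent_L2_01[OF h]] norm_volterra_resolvent_le[OF h]
    by (intro integral_mono) auto
  finally show ?thesis by simp
qed

lemma volterra_resolvent_eq:
  assumes h: "h \<in> L2_01" and t: "t \<in> {0..1}"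
  shows "volterra_resolvent c h t = volterra h t - complex_of_real c * volterra (volterra_resolvent c h) t"
proof -
  define D where "D g = volterra_resolvent c g t - (volterra g t - complex_of_real c * volterra (volterra_resolvent c g) t)" for g
  define B where "B = exp (2 * \<bar>c\<bar>)"
  have t1: "t \<le> 1" using t by simp
  have "D h = 0"
  proof (rule eq_zero_by_volterra_density[OF h, where K="B + 1 + \<bar>c\<bar> * B"])
    fix u assume u: "u \<in> L2_01"
    show "D (volterra u) = 0"
      unfolding D_def using volterra_resolvent_eq_continuous[OF volterra_L2_01[OF u]
          volterra_continuous[OF L2_01_integrable[OF u]] t] by simp
  next
    fix g assume g: "g \<in> L2_01"
    define d where "d s = h s - g s" for s
    have d: "d \<in> L2_01" unfolding d_def by (rule L2_01_diff[OF h g])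
    have \<phi>: "volterra_resolvent c h s - volterra_resolvent c g s = volterra_resolvent c d s" if "s \<le> 1" for s
      unfolding d_def by (rule volterra_resolvent_diff[OF h g that, symmetric])
    have V: "volterra h t - volterra g t = volterra d t" unfolding d_def
      by (rule volterra_diff[OF L2_01_integrable[OF h] L2_01_integrable[OF g] t1, symmetric])
    have "volterra (volterra_resolvent c h) t - volterra (volterra_resolvent c g) t
        = volterra (\<lambda>s. volterra_resolvent c h s - volterra_resolvent c g s) t"
      by (rule volterra_diff[OF L2_01_integrable[OF volterra_resolvent_L2_01[OF h]]
            L2_01_integrable[OF volterra_resolvent_L2_01[OF g]] t1, symmetric])
    also have "\<dots> = volterra (volterra_resolvent c d) t"
      using \<phi> t1 by (intro volterra_cong) auto
    finally have "D h - D g = volterra_resolvent c d t - volterra d t + complex_of_real c * volterra (volterra_resolvent c d) t"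
      unfolding D_def using \<phi>[OF t1] V by (simp add: algebra_simps)
    then have "norm (D h - D g)
        \<le> cmod (volterra_resolvent c d t) + cmod (volterra d t) + \<bar>c\<bar> * cmod (volterra (volterra_resolvent c d) t)"
      by (simp add: norm_mult order_trans[OF norm_triangle_ineq] norm_triangle_ineq4 add_mono)
    also have "\<dots> \<le> B * L1_norm d + L1_norm d + \<bar>c\<bar> * (B * L1_norm d)"
      unfolding B_def using norm_volterra_resolvent_le[OF d t] norm_volterra_le_L1_norm[OF L2_01_integrable[OF d] t1]
        norm_volterra_volterra_resolvent_le[OF d t1]
      by (intro add_mono mult_left_mono) auto
    finally show "norm (D h - D g) \<le> (B + 1 + \<bar>c\<bar> * B) * L1_norm (\<lambda>s. h s - g s)"
      unfolding d_def by (simp add: algebra_simps)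
  qed
  then show ?thesis unfolding D_def by simp
qed

lemma I_plus_cV_solvable:
  assumes h: "h \<in> L2_01"
  shows "\<exists>g. g \<in> L2_01 \<and> (AE t in M. g t + complex_of_real c * volterra g t = h t)"
proof (intro exI conjI)
  define g where "g t = h t - complex_of_real c * volterra_resolvent c h t" for t
  have \<phi>: "volterra_resolvent c h \<in> L2_01" by (rule volterra_resolvent_L2_01[OF h])
  show "g \<in> L2_01" unfolding g_def by (rule L2_01_diff[OF h L2_01_scale[OF \<phi>]])
  have "volterra g t = volterra_resolvent c h t" if t: "t \<in> {0..1}" for t
  proof -
    have "volterra g t = volterra h t - volterra (\<lambda>x. complex_of_real c * volterra_resolvent c h x) t"
      unfolding g_def using t by (intro volterra_diff L2_01_integrable h L2_01_scale \<phi>) simp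
    then show ?thesis using volterra_resolvent_eq[OF h t, of c] by (simp add: volterra_mult_left)
  qed
  then show "AE t in M. g t + complex_of_real c * volterra g t = h t"
    by (intro AE_I2) (simp add: g_def)
qed

subsection \<open>Powers of \<open>(I + c V)\<^sup>-\<^sup>1\<close>\<close>

lemma I_plus_cV_inv: assumes "h \<in> L2_01"
  shows "I_plus_cV_inv c h \<in> L2_01"
    and "AE t in M. I_plus_cV_inv c h t + complex_of_real c * volterra (I_plus_cV_inv c h) t = h t"
  using someI_ex[OF I_plus_cV_solvable[OF assms, of c]] unfolding I_plus_cV_inv_def by blast+

lemma funpow_I_plus_cV_inv_L2_01: "f \<in> L2_01 \<Longrightarrow> (I_plus_cV_inv c ^^ n) f \<in> L2_01"
  by (induction n) (simp_all add: I_plus_cV_inv)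

lemma wnorm_sq_0_le_of_I_plus_cV_eq:
  assumes x: "x \<in> L2_01" and y: "y \<in> L2_01" and c: "c \<ge> 0"
    and eq: "AE t in M. x t + complex_of_real c * volterra x t = y t"
  shows "wnorm_sq 0 x + c^2 * wnorm_sq 0 (volterra x) \<le> wnorm_sq 0 y"
proof -
  have "(\<lambda>t. x t + complex_of_real c * volterra x t) \<in> L2_01"
    by (intro L2_01_add L2_01_scale volterra_L2_01 x)
  then have "wnorm_sq 0 (\<lambda>t. x t + complex_of_real c * volterra x t) = wnorm_sq 0 y"
    by (intro wnorm_sq_cong_AE L2_01_measurable y eq)
  then show ?thesis using wnorm_sq_I_plus_cV[OF x c] by simp
qed

lemma I_plus_cV_eq_diff:
  assumes x1: "x1 \<in> L2_01" and x2: "x2 \<in> L2_01"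
    and "AE t in M. x1 t + complex_of_real c * volterra x1 t = y1 t"
    and "AE t in M. x2 t + complex_of_real c * volterra x2 t = y2 t"
  shows "AE t in M. (x1 t - x2 t) + complex_of_real c * volterra (\<lambda>s. x1 s - x2 s) t = y1 t - y2 t"
  using assms(3,4) AE_space
proof eventually_elim
  case (elim t)
  then have V: "volterra (\<lambda>s. x1 s - x2 s) t = volterra x1 t - volterra x2 t"
    by (intro volterra_diff L2_01_integrable x1 x2) simp
  have "(x1 t - x2 t) + complex_of_real c * volterra (\<lambda>s. x1 s - x2 s) t
      = (x1 t + complex_of_real c * volterra x1 t) - (x2 t + complex_of_real c * volterra x2 t)"
    unfolding V by (simp add: algebra_simps)
  then show ?case using elim(1,2) by simp
qed

lemma volterra_of_I_plus_cV_eq: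
  assumes x: "x \<in> L2_01" and y: "y \<in> L2_01"
    and eq: "AE t in M. x t + complex_of_real c * volterra x t = y t"
  shows "AE t in M. volterra x t + complex_of_real c * volterra (volterra x) t = volterra y t"
proof (rule AE_I2)
  fix t assume "t \<in> space M"
  then have t: "t \<le> 1" by simp
  have cVx: "(\<lambda>s. complex_of_real c * volterra x s) \<in> L2_01" by (intro L2_01_scale volterra_L2_01 x)
  have "volterra x t + complex_of_real c * volterra (volterra x) t
      = volterra (\<lambda>s. x s + complex_of_real c * volterra x s) t"
    using volterra_add[OF L2_01_integrable[OF x] L2_01_integrable[OF cVx] t] by (simp add: volterra_mult_left)
  also have "\<dots> = volterra y t"
    using t by (intro volterra_cong_AE L2_01_integrable L2_01_add x cVx y eq)
  finally show "volterra x t + complex_of_real c * volterra (volterra x) t = volterra y t" .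
qed

lemma I_plus_cV_eq_zero_imp_AE_zero:
  assumes x: "x \<in> L2_01" and c: "c \<ge> 0"
    and "AE t in M. x t + complex_of_real c * volterra x t = 0"
  shows "AE t in M. x t = 0"
proof (rule wnorm_sq_0_eq_0_imp_AE_zero[OF x])
  have "wnorm_sq 0 x + c^2 * wnorm_sq 0 (volterra x) \<le> wnorm_sq 0 (\<lambda>t. 0)"
    using assms by (intro wnorm_sq_0_le_of_I_plus_cV_eq L2_01_zero)
  moreover have "0 \<le> c^2 * wnorm_sq 0 (volterra x)" by (simp add: wnorm_sq_nonneg)
  moreover have "wnorm_sq 0 (\<lambda>t. 0) = 0" by (simp add: wnorm_sq_def)
  ultimately show "wnorm_sq 0 x \<le> 0" by linarith
qed

lemma funpow_I_plus_cV_inv_volterra: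
  assumes u: "u \<in> L2_01" and c: "c \<ge> 0"
  shows "AE t in M. (I_plus_cV_inv c ^^ n) (volterra u) t = volterra ((I_plus_cV_inv c ^^ n) u) t"
proof (induction n)
  case (Suc n)
  let ?T = "I_plus_cV_inv c"
  define a b where "a = (?T ^^ n) (volterra u)" and "b = (?T ^^ n) u"
  have a: "a \<in> L2_01" and b: "b \<in> L2_01"
    unfolding a_def b_def by (intro funpow_I_plus_cV_inv_L2_01 volterra_L2_01 u)+
  have "AE t in M. volterra (?T b) t + complex_of_real c * volterra (volterra (?T b)) t = volterra b t"
    by (rule volterra_of_I_plus_cV_eq[OF I_plus_cV_inv(1)[OF b] b I_plus_cV_inv(2)[OF b]])
  then have "AE t in M. volterra (?T b) t + complex_of_real c * volterra (volterra (?T b)) t = a t"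
    using Suc.IH unfolding a_def b_def by eventually_elim simp
  from I_plus_cV_eq_diff[OF I_plus_cV_inv(1)[OF a] volterra_L2_01[OF I_plus_cV_inv(1)[OF b]]
      I_plus_cV_inv(2)[OF a] this]
  have "AE t in M. (?T a t - volterra (?T b) t) + complex_of_real c * volterra (\<lambda>s. ?T a s - volterra (?T b) s) t = 0"
    by simp
  then have "AE t in M. ?T a t - volterra (?T b) t = 0"
    using I_plus_cV_eq_zero_imp_AE_zero[OF L2_01_diff[OF I_plus_cV_inv(1)[OF a] volterra_L2_01[OF I_plus_cV_inv(1)[OF b]]] c]
    by blast
  then show ?case unfolding a_def b_def by eventually_elim simp
qed simp

lemma wnorm_sq_funpow_I_plus_cV_inv_diff_le:
  assumes f: "f \<in> L2_01" and h: "h \<in> L2_01" and c: "c \<ge> 0"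
  shows "wnorm_sq 0 (\<lambda>t. (I_plus_cV_inv c ^^ n) f t - (I_plus_cV_inv c ^^ n) h t) \<le> wnorm_sq 0 (\<lambda>t. f t - h t)"
proof (induction n)
  case (Suc n)
  let ?T = "I_plus_cV_inv c"
  define a b where "a = (?T ^^ n) f" and "b = (?T ^^ n) h"
  have a: "a \<in> L2_01" and b: "b \<in> L2_01"
    unfolding a_def b_def by (intro funpow_I_plus_cV_inv_L2_01 f h)+
  have "wnorm_sq 0 (\<lambda>t. ?T a t - ?T b t) + c^2 * wnorm_sq 0 (volterra (\<lambda>t. ?T a t - ?T b t))
      \<le> wnorm_sq 0 (\<lambda>t. a t - b t)"
    by (rule wnorm_sq_0_le_of_I_plus_cV_eq[OF L2_01_diff[OF I_plus_cV_inv(1)[OF a] I_plus_cV_inv(1)[OF b]]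
          L2_01_diff[OF a b] c I_plus_cV_eq_diff[OF I_plus_cV_inv(1)[OF a] I_plus_cV_inv(1)[OF b]
          I_plus_cV_inv(2)[OF a] I_plus_cV_inv(2)[OF b]]])
  moreover have "0 \<le> c^2 * wnorm_sq 0 (volterra (\<lambda>t. ?T a t - ?T b t))" by (simp add: wnorm_sq_nonneg)
  ultimately show ?case using Suc.IH unfolding a_def b_def by simp
qed simp

lemma wnorm_sq_volterra_funpow_I_plus_cV_inv:
  assumes f: "f \<in> L2_01" and c: "c > 0"
  shows "(\<lambda>n. wnorm_sq 0 (volterra ((I_plus_cV_inv c ^^ n) f))) \<longlonglongrightarrow> 0"
proof -
  let ?T = "I_plus_cV_inv c"
  have "wnorm_sq 0 ((?T ^^ Suc n) f) + c^2 * wnorm_sq 0 (volterra ((?T ^^ Suc n) f)) \<le> wnorm_sq 0 ((?T ^^ n) f)" for n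
  proof -
    have x: "(?T ^^ n) f \<in> L2_01" by (rule funpow_I_plus_cV_inv_L2_01[OF f])
    show ?thesis
      using wnorm_sq_0_le_of_I_plus_cV_eq[OF I_plus_cV_inv(1)[OF x] x _ I_plus_cV_inv(2)[OF x]] c by simp
  qed
  then have "(\<lambda>n. c^2 * wnorm_sq 0 (volterra ((?T ^^ Suc n) f))) \<longlonglongrightarrow> 0"
    by (intro tendsto_zero_if_telescoping[where x="\<lambda>n. wnorm_sq 0 ((?T ^^ n) f)"]) (simp_all add: wnorm_sq_nonneg)
  then have "(\<lambda>n. (1 / c^2) * (c^2 * wnorm_sq 0 (volterra ((?T ^^ Suc n) f)))) \<longlonglongrightarrow> (1 / c^2) * 0"
    by (rule tendsto_mult_left)
  then have "(\<lambda>n. wnorm_sq 0 (volterra ((?T ^^ Suc n) f))) \<longlonglongrightarrow> 0" using c by simp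
  then show ?thesis by (rule LIMSEQ_imp_Suc)
qed

theorem L2_norm_funpow_I_plus_cV_inv:
  assumes c: "c > 0" and f: "f \<in> L2_01"
  shows "(\<lambda>n. L2_norm ((I_plus_cV_inv c ^^ n) f)) \<longlonglongrightarrow> 0"
proof -
  have "(\<lambda>n. wnorm_sq 0 ((I_plus_cV_inv c ^^ n) f)) \<longlonglongrightarrow> 0"
  proof (rule wnorm_sq_tendsto_zero_by_density[where T="\<lambda>n. I_plus_cV_inv c ^^ n"])
    show "0 \<le> (0::real)" "f \<in> L2_01" using f by simp_all
    show "(I_plus_cV_inv c ^^ n) g \<in> L2_01" if "g \<in> L2_01" for n g
      using that by (rule funpow_I_plus_cV_inv_L2_01)
    show "wnorm_sq 0 (\<lambda>t. (I_plus_cV_inv c ^^ n) g t - (I_plus_cV_inv c ^^ n) h t) \<le> wnorm_sq 0 (\<lambda>t. g t - h t)"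
      if "g \<in> L2_01" "h \<in> L2_01" for n g h
      using that c by (intro wnorm_sq_funpow_I_plus_cV_inv_diff_le) simp_all
  next
    fix u assume u: "u \<in> L2_01"
    have "wnorm_sq 0 ((I_plus_cV_inv c ^^ n) (volterra u)) = wnorm_sq 0 (volterra ((I_plus_cV_inv c ^^ n) u))" for n
      using c by (intro wnorm_sq_cong_AE[OF L2_01_measurable L2_01_measurable funpow_I_plus_cV_inv_volterra[OF u]]
          funpow_I_plus_cV_inv_L2_01 volterra_L2_01 u) simp
    then have "(\<lambda>n. wnorm_sq 0 ((I_plus_cV_inv c ^^ n) (volterra u))) = (\<lambda>n. wnorm_sq 0 (volterra ((I_plus_cV_inv c ^^ n) u)))"
      by (rule ext)
    then show "(\<lambda>n. wnorm_sq 0 ((I_plus_cV_inv c ^^ n) (volterra u))) \<longlonglongrightarrow> 0"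
      using wnorm_sq_volterra_funpow_I_plus_cV_inv[OF u c] by (simp only:)
  qed
  then have "(\<lambda>n. sqrt (wnorm_sq 0 ((I_plus_cV_inv c ^^ n) f))) \<longlonglongrightarrow> sqrt 0"
    by (rule tendsto_real_sqrt)
  then show ?thesis by (simp add: L2_norm_eq_sqrt_wnorm_sq)
qed

theorem lemma2p6:
  fixes c :: real and f :: "real \<Rightarrow> complex"
  assumes "c > 0" and "f \<in> L2_01"
  shows "((\<lambda>n. L2_norm ((I_minus_cV c ^^ n) f)) \<longlonglongrightarrow> 0) \<and>
         ((\<lambda>n. L2_norm ((I_plus_cV_inv c ^^ n) f)) \<longlonglongrightarrow> 0)"
  using L2_norm_funpow_I_minus_cV[OF assms] L2_norm_funpow_I_plus_cV_inv[OF assms] by blast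

end
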